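(* Let $F:\mathbb{R}^{n_0}\to\mathbb{R}$ be a generic, supertransversal fully-connected ReLU network with at least $n_0$ hidden units in the first layer. Identify each $\sigma\in\{-1,0,1\}^N$ with the closed face $Q_\sigma=\{x\in[-1,1]^N: x_l=\sigma_l \text{ whenever } \sigma_l\ne0\}$ of the cube $[-1,1]^N$ (with its product CW structure), of dimension equal to the number of zero entries of $\sigma$. Then the collection $\mathcal{S}(F)=\{Q_{s(C)}: C\in\mathcal{C}(F)\}$ is a pure $n_0$-dimensional subcomplex of $[-1,1]^N$ (closed under taking faces, and every cube in it is a face of an $n_0$-dimensional cube in it). Under $C\mapsto Q_{s(C)}$, the $n_0$-dimensional cells of $\mathcal{C}(F)$ correspond to the vertices of $\mathcal{S}(F)$, and in general the codimension-$k$ cells of $\mathcal{C}(F)$ correspond to the $k$-cells of $\mathcal{S}(F)$.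
   Context: A ReLU network of architecture $(n_0,\dots,n_m,1)$: affine maps $A_i:\mathbb{R}^{n_{i-1}}\to\mathbb{R}^{n_i}$, $1\le i\le m+1$, $n_{m+1}=1$; $F_i=\mathrm{ReLU}\circ A_i$ ($i\le m$), $G=A_{m+1}$, $F=G\circ F_m\circ\cdots\circ F_1$, $F_{(k)}=F_k\circ\cdots\circ F_1$ ($F_{(0)}=\mathrm{id}$), $F^{(k)}=G\circ F_m\circ\cdots\circ F_k$ ($F^{(m+1)}=G$). Node maps $F_{ij}=\pi_j\circ A_i\circ F_{(i-1)}$, $1\le i\le m+1$, $1\le j\le n_i$; $N=n_1+\dots+n_m+1$. Polyhedra are finite intersections of closed half-spaces; $C^\circ$ is the relative interior. $R^{(i)}$ is the polyhedral complex on $\mathbb{R}^{n_{i-1}}$ induced by the hyperplanes $H_{ij}=\{\pi_jA_i=0\}$ (cells: nonempty intersections of one choice among $\{\pi_jA_i\ge0\},\{\pi_jA_i\le0\},\{\pi_jA_i=0\}$ for each $j$). Canonical polyhedral complex: $\mathcal{C}(F_{(1)})=R^{(1)}$, $\mathcal{C}(F_{(k)})=\{C\cap F_{(k-1)}^{-1}(R)\neq\emptyset: C\in\mathcal{C}(F_{(k-1)}),R\in R^{(k)}\}$, $2\le k\le m+1$; $\mathcal{C}(F)$ is the last; likewise $\mathcal{C}(F^{(k)})$ on $\mathbb{R}^{n_{k-1}}$, $\mathcal{C}(F^{(m+1)})=R^{(m+1)}$. Sign sequence: $s(C)\in\{-1,0,1\}^N$, $s_{ij}(C)=\mathrm{sgn}(F_{ij}(x))$,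 $x\in C^\circ$. Generic: for every $i$, any $k$ of the hyperplanes $H_{i1},\dots,H_{in_i}$ meet in an affine subspace of dimension $n_{i-1}-k$ (empty if $k>n_{i-1}$). Supertransversal: for every $1\le i\le m$, the restriction of $F_i$ to the relative interior of each cell of $R^{(i)}$ is transverse to the relative interior of every cell of $\mathcal{C}(F^{(i+1)})$. *)

theory Defs
  imports "HOL-Analysis.Analysis" "HOL-Library.Function_Algebras"
begin

text \<open>Vectors of R^k are represented as functions nat => real that vanish at all
  coordinates >= k (coordinates are 0-based: pi_j is evaluation at j-1).
  We equip functions with the pointwise real vector space structure; the topology
  is the product topology of HOL-Analysis (on each R^k it is the Euclidean one).\<close>

instantiation "fun" :: (type, scaleR) scaleR
begin
definition scaleR_fun :: "real \<Rightarrow> ('a \<Rightarrow> 'b) \<Rightarrow> 'a \<Rightarrow> 'b"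
  where "scaleR_fun r f = (\<lambda>x. r *\<^sub>R f x)"
instance ..
end

instance "fun" :: (type, real_vector) real_vector
  by standard (auto simp: scaleR_fun_def fun_eq_iff scaleR_add_right scaleR_add_left)

definition vspace :: "nat \<Rightarrow> (nat \<Rightarrow> real) set" where
  "vspace k = {x. \<forall>j. k \<le> j \<longrightarrow> x j = 0}"

definition relu_vec :: "(nat \<Rightarrow> real) \<Rightarrow> (nat \<Rightarrow> real)" where
  "relu_vec x = (\<lambda>j. max 0 (x j))"

definition tangent :: "('a::real_vector) set \<Rightarrow> 'a set" where
  "tangent S = span {y - z | y z. y \<in> S \<and> z \<in> S}"

definition affdim :: "('a::real_vector) set \<Rightarrow> nat" where
  "affdim S = dim (tangent S)"

text \<open>A network of architecture (n 0, ..., n m, 1) is given by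
  m, the widths n, weights W i j k (layer i, output j < n i, input k < n (i-1))
  and biases b i j.\<close>

definition aff_layer :: "(nat \<Rightarrow> nat) \<Rightarrow> (nat \<Rightarrow> nat \<Rightarrow> nat \<Rightarrow> real) \<Rightarrow> (nat \<Rightarrow> nat \<Rightarrow> real)
    \<Rightarrow> nat \<Rightarrow> (nat \<Rightarrow> real) \<Rightarrow> (nat \<Rightarrow> real)" where
  "aff_layer n W b i x = (\<lambda>j. if j < n i then (\<Sum>k<n (i - 1). W i j k * x k) + b i j else 0)"

definition relu_layer where
  "relu_layer n W b i = relu_vec \<circ> aff_layer n W b i"

primrec apply_layers :: "(nat \<Rightarrow> nat) \<Rightarrow> (nat \<Rightarrow> nat \<Rightarrow> nat \<Rightarrow> real) \<Rightarrow> (nat \<Rightarrow> nat \<Rightarrow> real)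
    \<Rightarrow> nat \<Rightarrow> nat \<Rightarrow> (nat \<Rightarrow> real) \<Rightarrow> (nat \<Rightarrow> real)" where
  "apply_layers n W b i0 0 = id"
| "apply_layers n W b i0 (Suc d) = relu_layer n W b (i0 + d) \<circ> apply_layers n W b i0 d"

abbreviation Fpre where "Fpre n W b k \<equiv> apply_layers n W b 1 k"

definition node_map where
  "node_map n W b i j x = aff_layer n W b i (Fpre n W b (i - 1) x) j"

definition nodes :: "nat \<Rightarrow> (nat \<Rightarrow> nat) \<Rightarrow> (nat \<times> nat) set" where
  "nodes m n = {(i, j). 1 \<le> i \<and> i \<le> m + 1 \<and> j < n i}"

definition arr_cell where
  "arr_cell n W b i (\<tau>::nat \<Rightarrow> int) = {x \<in> vspace (n (i - 1)). \<forall>j < n i.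
      (\<tau> j = 1 \<longrightarrow> aff_layer n W b i x j \<ge> 0) \<and>
      (\<tau> j = -1 \<longrightarrow> aff_layer n W b i x j \<le> 0) \<and>
      (\<tau> j = 0 \<longrightarrow> aff_layer n W b i x j = 0)}"

definition arrangement :: "(nat \<Rightarrow> nat) \<Rightarrow> (nat \<Rightarrow> nat \<Rightarrow> nat \<Rightarrow> real) \<Rightarrow> (nat \<Rightarrow> nat \<Rightarrow> real)
    \<Rightarrow> nat \<Rightarrow> (nat \<Rightarrow> real) set set" where
  "arrangement n W b i = {arr_cell n W b i \<tau> | \<tau>. (\<forall>j < n i. \<tau> j \<in> {-1, 0, 1}) \<and> arr_cell n W b i \<tau> \<noteq> {}}"

text \<open>canon_from n W b k d is the canonical polyhedral complex on R^(n(k-1)) of the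
  composite of layers k, ..., k+d-1 (the last one without ReLU being irrelevant).
  Hence C(F_(k)) = canon_from 1 k, C(F) = canon_from 1 (m+1), and
  C(F^(k)) = canon_from k (m+2-k).\<close>
primrec canon_from :: "(nat \<Rightarrow> nat) \<Rightarrow> (nat \<Rightarrow> nat \<Rightarrow> nat \<Rightarrow> real) \<Rightarrow> (nat \<Rightarrow> nat \<Rightarrow> real)
    \<Rightarrow> nat \<Rightarrow> nat \<Rightarrow> (nat \<Rightarrow> real) set set" where
  "canon_from n W b k 0 = {vspace (n (k - 1))}"
| "canon_from n W b k (Suc d) =
     {C \<inter> (apply_layers n W b k d -` R) | C R.
        C \<in> canon_from n W b k d \<and> R \<in> arrangement n W b (k + d) \<and>
        C \<inter> (apply_layers n W b k d -` R) \<noteq> {}}"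

abbreviation canon_complex where
  "canon_complex m n W b \<equiv> canon_from n W b 1 (m + 1)"

definition sign_seq where
  "sign_seq m n W b C =
     (\<lambda>l. if l \<in> nodes m n
          then sgn (node_map n W b (fst l) (snd l) (SOME x. x \<in> rel_interior C)) else 0)"

definition hyperplane_nodes where
  "hyperplane_nodes n W b i J = {x \<in> vspace (n (i - 1)). \<forall>j\<in>J. aff_layer n W b i x j = 0}"

definition generic_net where
  "generic_net m n W b \<longleftrightarrow>
     (\<forall>i \<in> {1..m+1}. \<forall>J \<subseteq> {..<n i}.
        (card J \<le> n (i - 1) \<longrightarrow> hyperplane_nodes n W b i J \<noteq> {} \<and>
                                  affdim (hyperplane_nodes n W b i J) = n (i - 1) - card J) \<and>
        (card J > n (i - 1) \<longrightarrow> hyperplane_nodes n W b i J = {}))"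

text \<open>Differential of F_i restricted to the relative interior of a cell of R^(i), at x
  (F_i is affine there; the coordinates that are not positive at x are constant
  (zero) on the cell).\<close>
definition dlayer where
  "dlayer n W b i x v =
     (\<lambda>j. if j < n i \<and> aff_layer n W b i x j > 0 then (\<Sum>k<n (i - 1). W i j k * v k) else 0)"

definition transverse_on where
  "transverse_on n W b i C D \<longleftrightarrow>
     (\<forall>x \<in> rel_interior C. relu_layer n W b i x \<in> rel_interior D \<longrightarrow>
        {u + w | u w. u \<in> dlayer n W b i x ` tangent C \<and> w \<in> tangent D} = vspace (n i))"

definition supertransversal where
  "supertransversal m n W b \<longleftrightarrow>
     (\<forall>i \<in> {1..m}. \<forall>C \<in> arrangement n W b i. \<forall>D \<in> canon_from n W b (i + 1) (m + 1 - i).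
        transverse_on n W b i C D)"

definition cube :: "nat \<Rightarrow> (nat \<Rightarrow> nat) \<Rightarrow> (nat \<times> nat \<Rightarrow> real) \<Rightarrow> (nat \<times> nat \<Rightarrow> real) set" where
  "cube m n \<sigma> = {x. (\<forall>l. l \<notin> nodes m n \<longrightarrow> x l = 0) \<and>
      (\<forall>l \<in> nodes m n. -1 \<le> x l \<and> x l \<le> 1 \<and> (\<sigma> l \<noteq> 0 \<longrightarrow> x l = \<sigma> l))}"

definition sign_vectors :: "nat \<Rightarrow> (nat \<Rightarrow> nat) \<Rightarrow> (nat \<times> nat \<Rightarrow> real) set" where
  "sign_vectors m n = {\<sigma>. (\<forall>l. \<sigma> l \<in> {-1, 0, 1}) \<and> (\<forall>l. l \<notin> nodes m n \<longrightarrow> \<sigma> l = 0)}"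

definition cube_dim where
  "cube_dim m n \<sigma> = card {l \<in> nodes m n. \<sigma> l = 0}"

definition sign_complex where
  "sign_complex m n W b = (\<lambda>C. cube m n (sign_seq m n W b C)) ` canon_complex m n W b"

end

theory Submission
  imports Defs
begin

text \<open>With the activation pattern of a cell fixed, every node map agrees on the cell with an affine
  map, so a cell of C(F) is the polyhedron where these maps have prescribed signs, its relative
  interior is where they have exactly the signs s(C), and its tangent space is the common kernel
  of the linear parts of the node maps vanishing on C. Genericity and supertransversality make
  these linear parts jointly surjective (by induction over the layers, from the last one
  backwards); hence dim C + #{zeros of s(C)} = n_0, and from a point of C one can move into the
  cell with any sign sequence whose cube is a face of Q_s(C), which gives closure under faces.
  Purity comes from moving inside a cell along a line until one more node vanishes: this is
  possible while dim C > 0, because n_1 \<ge> n_0 makes the first layer injective, and ends at a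
  vertex of C(F).\<close>

section \<open>Linear algebra in coordinate spaces\<close>

lemma scaleR_fun_apply [simp]: "((c::real) *\<^sub>R (f::'a \<Rightarrow> real)) j = c * f j"
  by (simp add: scaleR_fun_def)

lemma sum_fun_apply: "(\<Sum>k\<in>A. (f k :: 'a \<Rightarrow> real)) j = (\<Sum>k\<in>A. f k j)"
  by (induction A rule: infinite_finite_induct) auto

lemma linear_coordinate: "linear (\<lambda>v::nat \<Rightarrow> real. v q)"
  by (simp add: linear_iff)

definition unit_vec :: "nat \<Rightarrow> nat \<Rightarrow> real" where
  "unit_vec q = (\<lambda>j. if j = q then 1 else 0)"

lemma subspace_vspace: "subspace (vspace N)"
  unfolding subspace_def vspace_def by auto

lemma vspace_subset_span_unit_vecs: "vspace N \<subseteq> span (unit_vec ` {..<N})"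
proof
  fix x assume x: "x \<in> vspace N"
  have "x = (\<Sum>q<N. x q *\<^sub>R unit_vec q)"
  proof
    fix j
    show "x j = (\<Sum>q<N. x q *\<^sub>R unit_vec q) j"
      using x by (cases "j < N") (auto simp: sum_fun_apply unit_vec_def vspace_def if_distrib cong: if_cong)
  qed
  also have "\<dots> \<in> span (unit_vec ` {..<N})"
    by (intro span_sum span_scale span_base) auto
  finally show "x \<in> span (unit_vec ` {..<N})" .
qed

lemma independent_in_vspace_finite: "B \<subseteq> vspace N \<Longrightarrow> independent B \<Longrightarrow> finite B"
  using independent_span_bound[of "unit_vec ` {..<N}" B] vspace_subset_span_unit_vecs[of N] by auto

lemma dim_mono_in_vspace:
  assumes "A \<subseteq> B" and "B \<subseteq> vspace N"
  shows "dim A \<le> dim B"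
proof -
  obtain C where C: "C \<subseteq> B" "independent C" "B \<subseteq> span C" "card C = dim B"
    using basis_exists by blast
  have "finite C" using C assms(2) independent_in_vspace_finite[of C N] by auto
  then show ?thesis using assms(1) C(3,4) dim_le_card[of A C] by auto
qed

lemma dim_pos_iff_nonzero:
  assumes "S \<subseteq> vspace N"
  shows "0 < dim S \<longleftrightarrow> (\<exists>v\<in>S. v \<noteq> 0)"
proof
  assume "0 < dim S"
  moreover have "S \<subseteq> {0} \<Longrightarrow> dim S \<le> card ({} :: (nat \<Rightarrow> real) set)"
    by (intro dim_le_card) auto
  ultimately show "\<exists>v\<in>S. v \<noteq> 0" by force
next
  assume "\<exists>v\<in>S. v \<noteq> 0"
  then obtain v where "v \<in> S" "v \<noteq> 0" by blast
  then have "dim {v} = 1" by (simp add: dim_eq_card_independent)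
  moreover have "dim {v} \<le> dim S" using \<open>v \<in> S\<close> assms by (intro dim_mono_in_vspace) auto
  ultimately show "0 < dim S" by simp
qed

lemma dim_eq_Suc_dim_kernel:
  assumes S: "subspace S" "S \<subseteq> vspace N" and g: "linear g" and s: "s \<in> S" "g s \<noteq> (0::real)"
  shows "dim S = Suc (dim {v\<in>S. g v = 0})"
proof -
  let ?S0 = "{v\<in>S. g v = 0}"
  obtain B where B: "B \<subseteq> ?S0" "independent B" "?S0 \<subseteq> span B" "card B = dim ?S0"
    using basis_exists by blast
  have "finite B" using B S independent_in_vspace_finite[of B N] by auto
  have "subspace ?S0"
    using S(1) g unfolding subspace_def by (auto simp: linear_add linear_scale linear_0)
  then have "span B \<subseteq> ?S0" using B(1) span_minimal by blast
  then have sB: "s \<notin> span B" using s by auto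
  have "S \<subseteq> span (insert s B)"
  proof
    fix v assume v: "v \<in> S"
    let ?c = "g v / g s"
    have "v - ?c *\<^sub>R s \<in> ?S0"
      using v s S(1) g by (auto simp: linear_diff linear_scale subspace_diff subspace_scale)
    then have "v - ?c *\<^sub>R s \<in> span (insert s B)"
      using B(3) span_mono[of B "insert s B"] by auto
    moreover have "?c *\<^sub>R s \<in> span (insert s B)"
      by (intro span_scale span_base) auto
    ultimately have "(v - ?c *\<^sub>R s) + ?c *\<^sub>R s \<in> span (insert s B)"
      by (rule span_add)
    then show "v \<in> span (insert s B)" by simp
  qed
  moreover have "independent (insert s B)"
    using B(2) sB by (simp add: independent_insert)
  moreover have "insert s B \<subseteq> S" using B(1) s by auto
  ultimately have "card (insert s B) = dim S"
    using basis_card_eq_dim by blast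
  then show ?thesis using B(4) \<open>finite B\<close> sB span_base[of s B] by (metis card_insert_disjoint)
qed

lemma dim_vspace: "dim (vspace N) = N"
proof (induction N)
  case 0
  have "\<not> 0 < dim (vspace 0)"
    using dim_pos_iff_nonzero[of "vspace 0" 0] by (auto simp: vspace_def fun_eq_iff)
  then show ?case by simp
next
  case (Suc N)
  have "unit_vec N \<in> vspace (Suc N)" "unit_vec N N \<noteq> 0"
    by (auto simp: unit_vec_def vspace_def)
  then have "dim (vspace (Suc N)) = Suc (dim {v \<in> vspace (Suc N). v N = 0})"
    by (intro dim_eq_Suc_dim_kernel[OF subspace_vspace order_refl linear_coordinate])
  also have "{v \<in> vspace (Suc N). v N = 0} = vspace N"
    unfolding vspace_def by (auto simp: le_Suc_eq dest: le_imp_less_or_eq)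
  finally show ?case using Suc by simp
qed

definition common_kernel :: "nat \<Rightarrow> ('l \<Rightarrow> (nat \<Rightarrow> real) \<Rightarrow> real) \<Rightarrow> 'l set \<Rightarrow> (nat \<Rightarrow> real) set" where
  "common_kernel N g Z = {v \<in> vspace N. \<forall>l\<in>Z. g l v = 0}"

lemma subspace_common_kernel: "(\<And>l. l \<in> Z \<Longrightarrow> linear (g l)) \<Longrightarrow> subspace (common_kernel N g Z)"
  unfolding subspace_def common_kernel_def vspace_def by (auto simp: linear_add linear_scale linear_0)

lemma common_kernel_subset_vspace: "common_kernel N g Z \<subseteq> vspace N"
  by (auto simp: common_kernel_def)

lemma dim_common_kernel_add_card:
  assumes "finite Z" "\<And>l. l \<in> Z \<Longrightarrow> linear (g l)"
    and "\<And>c. \<exists>v\<in>vspace N. \<forall>l\<in>Z. g l v = c l"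
  shows "dim (common_kernel N g Z) + card Z = N"
  using assms
proof (induction Z rule: finite_induct)
  case empty
  then show ?case by (simp add: common_kernel_def dim_vspace)
next
  case (insert l0 Z)
  then have IH: "dim (common_kernel N g Z) + card Z = N"
    by (metis insert_iff)
  obtain s where s: "s \<in> vspace N" "\<forall>l\<in>insert l0 Z. g l s = (if l = l0 then 1 else 0)"
    using insert.prems(2)[of "\<lambda>l. if l = l0 then 1 else 0"] by blast
  have "s \<in> common_kernel N g Z" using s insert(2) by (auto simp: common_kernel_def)
  then have "dim (common_kernel N g Z) = Suc (dim {v \<in> common_kernel N g Z. g l0 v = 0})"
    using s insert.prems(1)
    by (intro dim_eq_Suc_dim_kernel[OF _ common_kernel_subset_vspace]) (auto intro: subspace_common_kernel)
  moreover have "{v \<in> common_kernel N g Z. g l0 v = 0} = common_kernel N g (insert l0 Z)"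
    by (auto simp: common_kernel_def)
  ultimately show ?case using IH insert(1,2) by simp
qed

lemma surj_if_dim_common_kernel_add_card:
  assumes fin: "finite J" and lin: "\<And>j. j \<in> J \<Longrightarrow> linear (g j)"
    and dims: "\<And>J'. J' \<subseteq> J \<Longrightarrow> dim (common_kernel N g J') + card J' = N"
  shows "\<exists>v\<in>vspace N. \<forall>j\<in>J. g j v = c j"
proof -
  have "\<exists>u\<in>vspace N. g j0 u = 1 \<and> (\<forall>j\<in>J - {j0}. g j u = 0)" if j0: "j0 \<in> J" for j0
  proof -
    have "card J = Suc (card (J - {j0}))" using fin j0 by (metis card_Suc_Diff1)
    then have "\<not> dim (common_kernel N g (J - {j0})) \<le> dim (common_kernel N g J)"
      using dims[of J] dims[of "J - {j0}"] by simp
    then have "\<not> common_kernel N g (J - {j0}) \<subseteq> common_kernel N g J"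
      using dim_mono_in_vspace[OF _ common_kernel_subset_vspace] by blast
    then obtain u where u: "u \<in> vspace N" "\<forall>j\<in>J - {j0}. g j u = 0" "g j0 u \<noteq> 0"
      by (auto simp: common_kernel_def)
    show ?thesis
      using u lin j0
      by (intro bexI[of _ "(1 / g j0 u) *\<^sub>R u"]) (auto simp: linear_scale vspace_def)
  qed
  then obtain u where u: "\<forall>j0\<in>J. u j0 \<in> vspace N \<and> g j0 (u j0) = 1 \<and> (\<forall>j\<in>J - {j0}. g j (u j0) = 0)"
    by metis
  let ?v = "\<Sum>j0\<in>J. c j0 *\<^sub>R u j0"
  have "?v \<in> vspace N"
    using u by (auto simp: vspace_def sum_fun_apply)
  moreover have "g j ?v = c j" if j: "j \<in> J" for j
  proof -
    have "g j ?v = (\<Sum>j0\<in>J. c j0 * g j (u j0))"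
      using lin j by (simp add: linear_sum linear_scale)
    also have "\<dots> = (\<Sum>j0\<in>J. if j0 = j then c j else 0)"
      using u j by (intro sum.cong) auto
    also have "\<dots> = c j" using fin j by simp
    finally show ?thesis .
  qed
  ultimately show ?thesis by blast
qed

section \<open>Networks with a fixed activation pattern\<close>

definition sign_compat :: "real \<Rightarrow> real \<Rightarrow> bool" where
  "sign_compat t v \<longleftrightarrow> (if t > 0 then v \<ge> 0 else if t < 0 then v \<le> 0 else v = 0)"

lemma sign_compat_sgn: "sign_compat (sgn v) v"
  by (simp add: sign_compat_def sgn_real_def)

lemma sign_compat_sgnI: "sgn v = t \<Longrightarrow> sign_compat t v"
  using sign_compat_sgn by blast

lemma sign_compat_zero: "sign_compat t 0"
  by (simp add: sign_compat_def)

lemma sign_compat_midpoint: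
  "sign_compat t a \<Longrightarrow> sign_compat t c \<Longrightarrow> sign_compat t ((a + c) / 2) \<and> ((a + c) / 2 = 0 \<longleftrightarrow> a = 0 \<and> c = 0)"
  by (auto simp: sign_compat_def split: if_splits)

lemma not_sign_compat_sgn_neg: "a \<noteq> 0 \<Longrightarrow> t > 0 \<Longrightarrow> \<not> sign_compat (sgn a) (- t * a)"
  by (cases "a > 0") (auto simp: sign_compat_def zero_le_mult_iff mult_le_0_iff)

lemma eventually_sgn_add_scaled:
  fixes a c :: real
  shows "eventually (\<lambda>t. sgn (a + t * c) = (if a = 0 then sgn c else sgn a)) (at_right 0)"
proof (cases "a = 0")
  case True
  show ?thesis
    using eventually_at_right_less[of "0::real"] by eventually_elim (simp add: True sgn_mult)
next
  case False
  have lim: "((\<lambda>t. a + t * c) \<longlongrightarrow> a) (at_right 0)"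
    by (auto intro!: tendsto_eq_intros)
  show ?thesis
  proof (cases "a > 0")
    case True
    show ?thesis using order_tendstoD(1)[OF lim True] by eventually_elim (use True in auto)
  next
    case False
    then have "a < 0" using \<open>a \<noteq> 0\<close> by simp
    show ?thesis using order_tendstoD(2)[OF lim \<open>a < 0\<close>] by eventually_elim (use \<open>a < 0\<close> in auto)
  qed
qed

lemma sign_compat_sgn_add_scaled:
  fixes a c t :: real
  assumes "0 \<le> t" "a = 0 \<Longrightarrow> c = 0" "a * c < 0 \<Longrightarrow> t * \<bar>c\<bar> \<le> \<bar>a\<bar>"
  shows "sign_compat (sgn a) (a + t * c)"
proof (cases a "0::real" rule: linorder_cases)
  case less
  then have "0 < c \<Longrightarrow> t * c \<le> - a" using assms(3) by (simp add: mult_less_0_iff)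
  moreover have "c \<le> 0 \<Longrightarrow> t * c \<le> 0" using assms(1) by (simp add: mult_nonneg_nonpos)
  ultimately show ?thesis using less by (force simp: sign_compat_def)
next
  case greater
  then have "c < 0 \<Longrightarrow> - (t * c) \<le> a" using assms(3) by (simp add: mult_less_0_iff)
  moreover have "0 \<le> c \<Longrightarrow> 0 \<le> t * c" using assms(1) by simp
  ultimately show ?thesis using greater by (force simp: sign_compat_def)
qed (use assms(2) in \<open>simp add: sign_compat_def\<close>)

lemma add_scaled_eq_zero: "a * c < 0 \<Longrightarrow> a + (\<bar>a\<bar> / \<bar>c\<bar>) * c = (0::real)"
  by (auto simp: mult_less_0_iff abs_if field_simps)

lemma sign_compat_sgn_eq: "sign_compat (sgn a) w \<Longrightarrow> w \<noteq> 0 \<Longrightarrow> sgn a = sgn (w::real)"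
  by (auto simp: sign_compat_def sgn_real_def split: if_splits)

locale relu_net =
  fixes n :: "nat \<Rightarrow> nat" and W :: "nat \<Rightarrow> nat \<Rightarrow> nat \<Rightarrow> real" and b :: "nat \<Rightarrow> nat \<Rightarrow> real"
begin

definition lin_layer :: "nat \<Rightarrow> (nat \<Rightarrow> real) \<Rightarrow> nat \<Rightarrow> real" where
  "lin_layer i y j = (\<Sum>q<n (i - 1). W i j q * y q)"

lemma aff_layer_eq: "aff_layer n W b i y j = (if j < n i then lin_layer i y j + b i j else 0)"
  by (simp add: aff_layer_def lin_layer_def)

lemma lin_layer_add: "lin_layer i (x + v) j = lin_layer i x j + lin_layer i v j"
  by (simp add: lin_layer_def algebra_simps sum.distrib)

lemma lin_layer_scaleR: "lin_layer i (t *\<^sub>R v) j = t * lin_layer i v j"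
  by (simp add: lin_layer_def algebra_simps sum_distrib_left)

lemma linear_lin_layer: "linear (\<lambda>v. lin_layer i v j)"
  by (simp add: linear_iff lin_layer_add lin_layer_scaleR)

text \<open>Nodes are pairs (i, j) with 0-based j; node_val k l is the value of node l of the
  network whose first layer is layer k, so node_val 1 (i, j) is the node map F_ij.\<close>

definition layer_nodes :: "nat \<Rightarrow> nat \<Rightarrow> (nat \<times> nat) set" where
  "layer_nodes k d = {l. k \<le> fst l \<and> fst l < k + d \<and> snd l < n (fst l)}"

definition node_val :: "nat \<Rightarrow> nat \<times> nat \<Rightarrow> (nat \<Rightarrow> real) \<Rightarrow> real" where
  "node_val k l x = aff_layer n W b (fst l) (apply_layers n W b k (fst l - k) x) (snd l)"

definition pattern_cell :: "nat \<Rightarrow> nat \<Rightarrow> (nat \<times> nat \<Rightarrow> real) \<Rightarrow> (nat \<Rightarrow> real) set" where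
  "pattern_cell k d \<tau> = {x \<in> vspace (n (k - 1)). \<forall>l\<in>layer_nodes k d. sign_compat (\<tau> l) (node_val k l x)}"

definition sign_vec :: "nat \<Rightarrow> nat \<Rightarrow> (nat \<Rightarrow> real) \<Rightarrow> nat \<times> nat \<Rightarrow> real" where
  "sign_vec k d x = (\<lambda>l. if l \<in> layer_nodes k d then sgn (node_val k l x) else 0)"

abbreviation sign_cell :: "nat \<Rightarrow> nat \<Rightarrow> (nat \<Rightarrow> real) \<Rightarrow> (nat \<Rightarrow> real) set" where
  "sign_cell k d x \<equiv> pattern_cell k d (sign_vec k d x)"

text \<open>The network with the ReLU at node l replaced by the identity if \<open>\<tau> l > 0\<close> and by
  zero otherwise: an affine map that agrees with the network on the pattern cell of \<open>\<tau>\<close>.\<close>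

primrec pattern_map :: "nat \<Rightarrow> nat \<Rightarrow> (nat \<times> nat \<Rightarrow> real) \<Rightarrow> (nat \<Rightarrow> real) \<Rightarrow> nat \<Rightarrow> real" where
  "pattern_map k 0 \<tau> = id"
| "pattern_map k (Suc e) \<tau> =
     (\<lambda>y j. if 0 < \<tau> (k + e, j) then aff_layer n W b (k + e) (pattern_map k e \<tau> y) j else 0)"

primrec pattern_lin :: "nat \<Rightarrow> nat \<Rightarrow> (nat \<times> nat \<Rightarrow> real) \<Rightarrow> (nat \<Rightarrow> real) \<Rightarrow> nat \<Rightarrow> real" where
  "pattern_lin k 0 \<tau> v = v"
| "pattern_lin k (Suc e) \<tau> v =
     (\<lambda>j. if j < n (k + e) \<and> 0 < \<tau> (k + e, j) then lin_layer (k + e) (pattern_lin k e \<tau> v) j else 0)"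

definition pattern_node :: "nat \<Rightarrow> nat \<times> nat \<Rightarrow> (nat \<times> nat \<Rightarrow> real) \<Rightarrow> (nat \<Rightarrow> real) \<Rightarrow> real" where
  "pattern_node k l \<tau> y = aff_layer n W b (fst l) (pattern_map k (fst l - k) \<tau> y) (snd l)"

definition pattern_node_lin :: "nat \<Rightarrow> nat \<times> nat \<Rightarrow> (nat \<times> nat \<Rightarrow> real) \<Rightarrow> (nat \<Rightarrow> real) \<Rightarrow> real" where
  "pattern_node_lin k l \<tau> v = lin_layer (fst l) (pattern_lin k (fst l - k) \<tau> v) (snd l)"

lemma finite_layer_nodes: "finite (layer_nodes k d)"
proof -
  have "layer_nodes k d \<subseteq> (SIGMA i:{k..<k+d}. {..<n i})" by (auto simp: layer_nodes_def)
  then show ?thesis by (rule finite_subset) auto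
qed

lemma layer_nodes_mono: "d \<le> d' \<Longrightarrow> layer_nodes k d \<subseteq> layer_nodes k d'"
  by (auto simp: layer_nodes_def)

lemma layer_nodes_Suc_first:
  "layer_nodes k (Suc d) = {l. fst l = k \<and> snd l < n k} \<union> layer_nodes (Suc k) d"
  by (auto simp: layer_nodes_def) (metis le_antisym not_less_eq_eq)

lemma pattern_lin_add: "pattern_lin k e \<tau> (x + v) = pattern_lin k e \<tau> x + pattern_lin k e \<tau> v"
proof (induction e)
  case (Suc e)
  show ?case unfolding pattern_lin.simps Suc.IH by (auto simp: fun_eq_iff lin_layer_add)
qed simp

lemma pattern_lin_scaleR: "pattern_lin k e \<tau> (t *\<^sub>R v) = t *\<^sub>R pattern_lin k e \<tau> v"
proof (induction e)
  case (Suc e)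
  show ?case unfolding pattern_lin.simps Suc.IH by (auto simp: fun_eq_iff lin_layer_scaleR)
qed simp

lemma pattern_map_add_scaleR:
  "pattern_map k e \<tau> (x + t *\<^sub>R v) = pattern_map k e \<tau> x + t *\<^sub>R pattern_lin k e \<tau> v"
proof (induction e)
  case (Suc e)
  show ?case
    unfolding pattern_map.simps pattern_lin.simps Suc.IH
    by (auto simp: fun_eq_iff aff_layer_eq lin_layer_add lin_layer_scaleR)
qed simp

lemma linear_pattern_node_lin: "linear (pattern_node_lin k l \<tau>)"
  by (simp add: linear_iff pattern_node_lin_def pattern_lin_add pattern_lin_scaleR lin_layer_add lin_layer_scaleR)

lemma pattern_node_add_scaleR:
  "snd l < n (fst l) \<Longrightarrow> pattern_node k l \<tau> (x + t *\<^sub>R v) = pattern_node k l \<tau> x + t * pattern_node_lin k l \<tau> v"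
  by (simp add: pattern_node_def pattern_node_lin_def pattern_map_add_scaleR aff_layer_eq lin_layer_add lin_layer_scaleR)

lemma pattern_node_diff:
  "snd l < n (fst l) \<Longrightarrow> pattern_node k l \<tau> x - pattern_node k l \<tau> y = pattern_node_lin k l \<tau> (x - y)"
  using pattern_node_add_scaleR[of l k \<tau> y 1 "x - y"] by simp

lemma relu_layer_pattern:
  assumes "\<forall>j<n i. sign_compat (\<tau> (i, j)) (aff_layer n W b i y j)"
  shows "relu_layer n W b i y = (\<lambda>j. if 0 < \<tau> (i, j) then aff_layer n W b i y j else 0)"
proof
  fix j
  show "relu_layer n W b i y j = (if 0 < \<tau> (i, j) then aff_layer n W b i y j else 0)"
  proof (cases "j < n i")
    case True
    then show ?thesis using assms by (auto simp: relu_layer_def relu_vec_def sign_compat_def split: if_splits)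
  qed (auto simp: relu_layer_def relu_vec_def aff_layer_def)
qed

lemma layer_compat_of_nodes:
  assumes "\<forall>l\<in>layer_nodes k (Suc d). sign_compat (\<tau> l) (node_val k l x)"
  shows "\<forall>j<n (k + d). sign_compat (\<tau> (k + d, j)) (aff_layer n W b (k + d) (apply_layers n W b k d x) j)"
proof (intro allI impI)
  fix j assume "j < n (k + d)"
  then have "(k + d, j) \<in> layer_nodes k (Suc d)" by (auto simp: layer_nodes_def)
  then show "sign_compat (\<tau> (k + d, j)) (aff_layer n W b (k + d) (apply_layers n W b k d x) j)"
    using assms by (auto simp: node_val_def)
qed

lemma apply_layers_eq_pattern_map:
  assumes "\<forall>l\<in>layer_nodes k d. sign_compat (\<tau> l) (node_val k l x)"
  shows "apply_layers n W b k d x = pattern_map k d \<tau> x"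
  using assms
proof (induction d)
  case 0
  then show ?case by simp
next
  case (Suc d)
  then have IH: "apply_layers n W b k d x = pattern_map k d \<tau> x"
    using layer_nodes_mono[of d "Suc d" k] by auto
  then show ?case
    using layer_compat_of_nodes[OF Suc.prems] relu_layer_pattern[of "k + d" \<tau>] by (simp add: relu_layer_def)
qed

lemma pattern_cell_node_val:
  assumes "x \<in> pattern_cell k d \<tau>" "l \<in> layer_nodes k d"
  shows "node_val k l x = pattern_node k l \<tau> x"
proof -
  have "fst l - k \<le> d" using assms(2) by (auto simp: layer_nodes_def)
  then have "\<forall>l\<in>layer_nodes k (fst l - k). sign_compat (\<tau> l) (node_val k l x)"
    using assms(1) layer_nodes_mono unfolding pattern_cell_def by blast
  then show ?thesis using apply_layers_eq_pattern_map by (simp add: node_val_def pattern_node_def)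
qed

lemma node_val_eq_pattern_node_if_compat:
  assumes "\<forall>l\<in>layer_nodes k d. sign_compat (\<tau> l) (pattern_node k l \<tau> x)"
  shows "\<forall>l\<in>layer_nodes k d. node_val k l x = pattern_node k l \<tau> x"
  using assms
proof (induction d)
  case 0
  then show ?case by (simp add: layer_nodes_def)
next
  case (Suc d)
  then have IH: "\<forall>l\<in>layer_nodes k d. node_val k l x = pattern_node k l \<tau> x"
    using layer_nodes_mono[of d "Suc d" k] by auto
  then have "\<forall>l\<in>layer_nodes k d. sign_compat (\<tau> l) (node_val k l x)"
    using Suc.prems layer_nodes_mono[of d "Suc d" k] by auto
  then have "apply_layers n W b k d x = pattern_map k d \<tau> x"
    by (rule apply_layers_eq_pattern_map)
  then have top: "node_val k (k + d, j) x = pattern_node k (k + d, j) \<tau> x" for j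
    by (simp add: node_val_def pattern_node_def)
  show ?case
  proof
    fix l assume l: "l \<in> layer_nodes k (Suc d)"
    show "node_val k l x = pattern_node k l \<tau> x"
    proof (cases "fst l < k + d")
      case True
      then have "l \<in> layer_nodes k d" using l by (auto simp: layer_nodes_def)
      then show ?thesis using IH by blast
    next
      case False
      then have "fst l = k + d" using l by (auto simp: layer_nodes_def)
      then show ?thesis using top[of "snd l"] by (cases l) auto
    qed
  qed
qed

lemma mem_pattern_cell_iff:
  "x \<in> pattern_cell k d \<tau> \<longleftrightarrow>
     x \<in> vspace (n (k - 1)) \<and> (\<forall>l\<in>layer_nodes k d. sign_compat (\<tau> l) (pattern_node k l \<tau> x))"
proof
  assume x: "x \<in> pattern_cell k d \<tau>"
  have "sign_compat (\<tau> l) (pattern_node k l \<tau> x)" if "l \<in> layer_nodes k d" for l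
  proof -
    have "sign_compat (\<tau> l) (node_val k l x)" using x that by (simp add: pattern_cell_def)
    then show ?thesis using pattern_cell_node_val[OF x that] by simp
  qed
  then show "x \<in> vspace (n (k - 1)) \<and> (\<forall>l\<in>layer_nodes k d. sign_compat (\<tau> l) (pattern_node k l \<tau> x))"
    using x by (simp add: pattern_cell_def)
next
  assume A: "x \<in> vspace (n (k - 1)) \<and> (\<forall>l\<in>layer_nodes k d. sign_compat (\<tau> l) (pattern_node k l \<tau> x))"
  then have "\<forall>l\<in>layer_nodes k d. node_val k l x = pattern_node k l \<tau> x"
    using node_val_eq_pattern_node_if_compat by blast
  then show "x \<in> pattern_cell k d \<tau>" using A by (simp add: pattern_cell_def)
qed

lemma relu_layer_in_vspace: "relu_layer n W b i y \<in> vspace (n i)"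
  by (simp add: relu_layer_def relu_vec_def aff_layer_def vspace_def)

lemma apply_layers_in_vspace:
  "x \<in> vspace (n (k - 1)) \<Longrightarrow> apply_layers n W b k d x \<in> vspace (n (k + d - 1))"
  by (cases d) (auto simp: relu_layer_in_vspace)

lemma apply_layers_Suc_first:
  "apply_layers n W b k (Suc d) x = apply_layers n W b (Suc k) d (relu_layer n W b k x)"
  by (induction d arbitrary: x) (auto simp: add.commute add.left_commute)

lemma pattern_lin_Suc_first: "pattern_lin k (Suc e) \<tau> v = pattern_lin (Suc k) e \<tau> (pattern_lin k 1 \<tau> v)"
  by (induction e arbitrary: v) (auto simp: fun_eq_iff add.commute add.left_commute)

lemma node_val_Suc_first: "k < fst l \<Longrightarrow> node_val k l x = node_val (Suc k) l (relu_layer n W b k x)"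
proof -
  assume "k < fst l"
  then have "fst l - k = Suc (fst l - Suc k)" by simp
  then show ?thesis by (simp only: node_val_def apply_layers_Suc_first)
qed

lemma pattern_node_lin_Suc_first:
  "k < fst l \<Longrightarrow> pattern_node_lin k l \<tau> v = pattern_node_lin (Suc k) l \<tau> (pattern_lin k 1 \<tau> v)"
proof -
  assume "k < fst l"
  then have "fst l - k = Suc (fst l - Suc k)" by simp
  then show ?thesis by (simp only: pattern_node_lin_def pattern_lin_Suc_first)
qed

lemma pattern_node_lin_first: "pattern_node_lin k (k, j) \<tau> v = lin_layer k v j"
  by (simp add: pattern_node_lin_def)

lemma node_val_first: "node_val k (k, j) x = aff_layer n W b k x j"
  by (simp add: node_val_def)

lemma mem_sign_cell: "x \<in> vspace (n (k - 1)) \<Longrightarrow> x \<in> sign_cell k d x"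
  by (auto simp: pattern_cell_def sign_vec_def sign_compat_sgn)

lemma pattern_cell_midpoint:
  assumes x: "x \<in> pattern_cell k d \<tau>" and y: "y \<in> pattern_cell k d \<tau>"
  shows "x + (1/2) *\<^sub>R (y - x) \<in> pattern_cell k d \<tau> \<and>
    (\<forall>l\<in>layer_nodes k d. node_val k l (x + (1/2) *\<^sub>R (y - x)) = (node_val k l x + node_val k l y) / 2)"
proof -
  let ?z = "x + (1/2) *\<^sub>R (y - x)"
  have mid: "pattern_node k l \<tau> ?z = (node_val k l x + node_val k l y) / 2" if l: "l \<in> layer_nodes k d" for l
  proof -
    have sl: "snd l < n (fst l)" using l by (auto simp: layer_nodes_def)
    have "pattern_node k l \<tau> ?z = pattern_node k l \<tau> x + (1/2) * (pattern_node k l \<tau> y - pattern_node k l \<tau> x)"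
      using pattern_node_add_scaleR[OF sl, of k \<tau> x "1/2" "y - x"] pattern_node_diff[OF sl, of k \<tau> y x] by simp
    then show ?thesis
      using pattern_cell_node_val[OF x l] pattern_cell_node_val[OF y l] by (simp add: field_simps)
  qed
  have "?z \<in> vspace (n (k - 1))" using x y by (auto simp: pattern_cell_def vspace_def)
  moreover have "sign_compat (\<tau> l) (pattern_node k l \<tau> ?z)" if "l \<in> layer_nodes k d" for l
    using sign_compat_midpoint[of "\<tau> l" "node_val k l x" "node_val k l y"] x y that
    by (auto simp: mid pattern_cell_def)
  ultimately have z: "?z \<in> pattern_cell k d \<tau>" by (simp add: mem_pattern_cell_iff)
  then show ?thesis using mid pattern_cell_node_val[OF z] by simp
qed

lemma pattern_node_affine_comb:
  assumes "snd l < n (fst l)" "u + v = 1"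
  shows "pattern_node k l \<tau> (u *\<^sub>R a + v *\<^sub>R c) = u * pattern_node k l \<tau> a + v * pattern_node k l \<tau> c"
proof -
  have u: "u = 1 - v" using assms(2) by simp
  have "u *\<^sub>R a + v *\<^sub>R c = a + v *\<^sub>R (c - a)"
    unfolding u by (simp add: algebra_simps)
  then show ?thesis
    using pattern_node_add_scaleR[OF assms(1), of k \<tau> a v "c - a"] pattern_node_diff[OF assms(1), of k \<tau> c a]
    by (simp add: u algebra_simps)
qed

section \<open>Cells of the canonical complex\<close>

definition zero_nodes :: "nat \<Rightarrow> nat \<Rightarrow> (nat \<Rightarrow> real) \<Rightarrow> (nat \<times> nat) set" where
  "zero_nodes k d x = {l \<in> layer_nodes k d. node_val k l x = 0}"

definition cell_dirs :: "nat \<Rightarrow> nat \<Rightarrow> (nat \<Rightarrow> real) \<Rightarrow> (nat \<Rightarrow> real) set" where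
  "cell_dirs k d x = common_kernel (n (k - 1)) (\<lambda>l. pattern_node_lin k l (sign_vec k d x)) (zero_nodes k d x)"

lemma finite_zero_nodes: "finite (zero_nodes k d x)"
  using finite_layer_nodes by (simp add: zero_nodes_def)

lemma subspace_cell_dirs: "subspace (cell_dirs k d x)"
  unfolding cell_dirs_def by (rule subspace_common_kernel) (simp add: linear_pattern_node_lin)

lemma cell_dirs_subset_vspace: "cell_dirs k d x \<subseteq> vspace (n (k - 1))"
  by (simp add: cell_dirs_def common_kernel_subset_vspace)

lemma cell_dirs_zero: "v \<in> cell_dirs k d x \<Longrightarrow> l \<in> zero_nodes k d x \<Longrightarrow> pattern_node_lin k l (sign_vec k d x) v = 0"
  unfolding cell_dirs_def common_kernel_def by blast

lemma zero_nodes_subset_if_mem_sign_cell: "y \<in> sign_cell k d x \<Longrightarrow> zero_nodes k d x \<subseteq> zero_nodes k d y"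
  by (auto simp: pattern_cell_def zero_nodes_def sign_vec_def sign_compat_def)

lemma pattern_cell_eq_sign_cell:
  assumes x: "x \<in> pattern_cell k d \<tau>"
    and min: "\<And>y. y \<in> pattern_cell k d \<tau> \<Longrightarrow> zero_nodes k d x \<subseteq> zero_nodes k d y"
  shows "pattern_cell k d \<tau> = sign_cell k d x"
proof -
  have equiv: "sign_compat (\<tau> l) v \<longleftrightarrow> sign_compat (sign_vec k d x l) v"
    if "l \<in> layer_nodes k d" "node_val k l x \<noteq> 0" for l v
    using x that by (auto simp: pattern_cell_def sign_vec_def sign_compat_def sgn_real_def)
  have "sign_compat (\<tau> l) (node_val k l y) \<longleftrightarrow> sign_compat (sign_vec k d x l) (node_val k l y)"
    if y: "y \<in> pattern_cell k d \<tau> \<or> y \<in> sign_cell k d x" and l: "l \<in> layer_nodes k d" for l y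
  proof (cases "node_val k l x = 0")
    case True
    then have "node_val k l y = 0"
      using y l min zero_nodes_subset_if_mem_sign_cell by (fastforce simp: zero_nodes_def)
    then show ?thesis by (simp add: sign_compat_zero)
  qed (use equiv l in blast)
  then show ?thesis by (auto simp: pattern_cell_def)
qed

text \<open>Every nonempty pattern cell is the cell of the sign sequence of its points with the fewest
  vanishing nodes: by convexity, such a point vanishes only where all points of the cell do.\<close>

lemma pattern_cell_realized:
  assumes "pattern_cell k d \<tau> \<noteq> {}"
  obtains x where "x \<in> pattern_cell k d \<tau>" "pattern_cell k d \<tau> = sign_cell k d x"
proof -
  obtain x where x: "x \<in> pattern_cell k d \<tau>"
    and least: "\<And>y. y \<in> pattern_cell k d \<tau> \<Longrightarrow> card (zero_nodes k d x) \<le> card (zero_nodes k d y)"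
    using assms ex_has_least_nat[of "\<lambda>x. x \<in> pattern_cell k d \<tau>" _ "\<lambda>x. card (zero_nodes k d x)"] by blast
  have "zero_nodes k d x \<subseteq> zero_nodes k d y" if y: "y \<in> pattern_cell k d \<tau>" for y
  proof -
    let ?z = "x + (1/2) *\<^sub>R (y - x)"
    have z: "?z \<in> pattern_cell k d \<tau>"
      "\<forall>l\<in>layer_nodes k d. node_val k l ?z = (node_val k l x + node_val k l y) / 2"
      using pattern_cell_midpoint[OF x y] by auto
    have "node_val k l ?z = 0 \<longleftrightarrow> node_val k l x = 0 \<and> node_val k l y = 0" if "l \<in> layer_nodes k d" for l
      using z(2) that sign_compat_midpoint[of "\<tau> l" "node_val k l x" "node_val k l y"] x y
      by (auto simp: pattern_cell_def)
    then have "zero_nodes k d ?z = zero_nodes k d x \<inter> zero_nodes k d y"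
      by (auto simp: zero_nodes_def)
    then have "zero_nodes k d ?z = zero_nodes k d x"
      using card_seteq[OF finite_zero_nodes _ least[OF z(1)]] by blast
    then show ?thesis
      using \<open>zero_nodes k d ?z = zero_nodes k d x \<inter> zero_nodes k d y\<close> by blast
  qed
  then show ?thesis using that x pattern_cell_eq_sign_cell by blast
qed

lemma perturb_into_pattern:
  assumes x: "x \<in> vspace (n (k - 1))" and v: "v \<in> vspace (n (k - 1))"
    and ref: "\<forall>l\<in>layer_nodes k d. node_val k l x \<noteq> 0 \<longrightarrow> \<tau> l = sgn (node_val k l x)"
    and dir: "\<forall>l\<in>layer_nodes k d. node_val k l x = 0 \<longrightarrow> sgn (pattern_node_lin k l \<tau> v) = \<tau> l"
  shows "\<exists>e>0. x + e *\<^sub>R v \<in> pattern_cell k d \<tau> \<and> (\<forall>l\<in>layer_nodes k d. sgn (node_val k l (x + e *\<^sub>R v)) = \<tau> l)"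
proof -
  have "sign_compat (\<tau> l) (node_val k l x)" if "l \<in> layer_nodes k d" for l
    using ref that by (cases "node_val k l x = 0") (auto simp: sign_compat_zero intro: sign_compat_sgnI)
  then have xS: "x \<in> pattern_cell k d \<tau>"
    using x by (auto simp: pattern_cell_def)
  have "eventually (\<lambda>t. \<forall>l\<in>layer_nodes k d. sgn (node_val k l x + t * pattern_node_lin k l \<tau> v) = \<tau> l) (at_right 0)"
  proof (rule eventually_ball_finite[OF finite_layer_nodes], rule ballI)
    fix l assume "l \<in> layer_nodes k d"
    then show "eventually (\<lambda>t. sgn (node_val k l x + t * pattern_node_lin k l \<tau> v) = \<tau> l) (at_right 0)"
      using eventually_sgn_add_scaled[of "node_val k l x" "pattern_node_lin k l \<tau> v"] ref dir
      by (auto elim!: eventually_mono)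
  qed
  then obtain e :: real where e: "e > 0" "\<forall>l\<in>layer_nodes k d. sgn (node_val k l x + e * pattern_node_lin k l \<tau> v) = \<tau> l"
    using eventually_happens'[OF trivial_limit_at_right_real eventually_conj[OF eventually_at_right_less]]
    by blast
  have val: "pattern_node k l \<tau> (x + e *\<^sub>R v) = node_val k l x + e * pattern_node_lin k l \<tau> v"
    if "l \<in> layer_nodes k d" for l
    using pattern_node_add_scaleR[of l k \<tau> x e v] pattern_cell_node_val[OF xS that] that
    by (auto simp: layer_nodes_def)
  have "x + e *\<^sub>R v \<in> vspace (n (k - 1))" using x v by (auto simp: vspace_def)
  then have yS: "x + e *\<^sub>R v \<in> pattern_cell k d \<tau>"
    using val e(2) by (auto simp: mem_pattern_cell_iff intro: sign_compat_sgnI)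
  show ?thesis
    using e val pattern_cell_node_val[OF yS] yS by (intro exI[of _ e]) auto
qed

lemma affine_pattern_flat: "affine {z \<in> vspace (n (k - 1)). \<forall>l\<in>zero_nodes k d x. pattern_node k l \<tau> z = 0}"
  unfolding affine_def
proof (intro ballI allI impI)
  fix a c :: "nat \<Rightarrow> real" and u v :: real
  assume a: "a \<in> {z \<in> vspace (n (k - 1)). \<forall>l\<in>zero_nodes k d x. pattern_node k l \<tau> z = 0}"
    and c: "c \<in> {z \<in> vspace (n (k - 1)). \<forall>l\<in>zero_nodes k d x. pattern_node k l \<tau> z = 0}"
    and uv: "u + v = 1"
  have "pattern_node k l \<tau> (u *\<^sub>R a + v *\<^sub>R c) = 0" if l: "l \<in> zero_nodes k d x" for l
  proof -
    have "snd l < n (fst l)" using l by (auto simp: zero_nodes_def layer_nodes_def)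
    then show ?thesis using pattern_node_affine_comb[OF _ uv] a c l by simp
  qed
  moreover have "u *\<^sub>R a + v *\<^sub>R c \<in> vspace (n (k - 1))" using a c by (auto simp: vspace_def)
  ultimately show "u *\<^sub>R a + v *\<^sub>R c \<in> {z \<in> vspace (n (k - 1)). \<forall>l\<in>zero_nodes k d x. pattern_node k l \<tau> z = 0}"
    by simp
qed

lemma affine_hull_sign_cell_subset:
  "affine hull (sign_cell k d x) \<subseteq>
     {z \<in> vspace (n (k - 1)). \<forall>l\<in>zero_nodes k d x. pattern_node k l (sign_vec k d x) z = 0}"
proof (rule hull_minimal)
  show "sign_cell k d x \<subseteq> {z \<in> vspace (n (k - 1)). \<forall>l\<in>zero_nodes k d x. pattern_node k l (sign_vec k d x) z = 0}"
  proof
    fix s assume s: "s \<in> sign_cell k d x"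
    have "pattern_node k l (sign_vec k d x) s = 0" if "l \<in> zero_nodes k d x" for l
    proof -
      have "l \<in> layer_nodes k d" "node_val k l s = 0"
        using zero_nodes_subset_if_mem_sign_cell[OF s] that by (auto simp: zero_nodes_def)
      then show ?thesis using pattern_cell_node_val[OF s] by simp
    qed
    moreover have "s \<in> vspace (n (k - 1))" using s by (simp add: pattern_cell_def)
    ultimately show "s \<in> {z \<in> vspace (n (k - 1)). \<forall>l\<in>zero_nodes k d x. pattern_node k l (sign_vec k d x) z = 0}"
      by simp
  qed
qed (rule affine_pattern_flat)

lemma continuous_aff_layer: "continuous_on UNIV (\<lambda>y. aff_layer n W b i y j)"
  unfolding aff_layer_eq lin_layer_def by (cases "j < n i") (auto intro!: continuous_intros)

lemma continuous_pattern_map: "continuous_on UNIV (pattern_map k e \<tau>)"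
proof (induction e)
  case 0
  then show ?case by (simp add: continuous_on_id)
next
  case (Suc e)
  show ?case
  proof (simp, intro continuous_on_coordinatewise_then_product)
    fix j
    have "continuous_on UNIV (\<lambda>y. aff_layer n W b (k + e) (pattern_map k e \<tau> y) j)"
      by (rule continuous_on_compose2[OF continuous_aff_layer Suc]) auto
    then show "continuous_on UNIV (\<lambda>y. if 0 < \<tau> (k + e, j) then aff_layer n W b (k + e) (pattern_map k e \<tau> y) j else 0)"
      by (cases "0 < \<tau> (k + e, j)") auto
  qed
qed

lemma continuous_pattern_node: "continuous_on UNIV (pattern_node k l \<tau>)"
  unfolding pattern_node_def by (rule continuous_on_compose2[OF continuous_aff_layer continuous_pattern_map]) auto

text \<open>Near a point y with the sign sequence of x, the strict inequalities of that sign sequence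
  persist, and the vanishing nodes of x stay zero on the affine hull.\<close>

lemma sign_class_subset_rel_interior:
  assumes y: "y \<in> vspace (n (k - 1))" "sign_vec k d y = sign_vec k d x"
  shows "y \<in> rel_interior (sign_cell k d x)"
proof -
  let ?\<sigma> = "sign_vec k d x" and ?S = "sign_cell k d x"
  define U where "U = (\<Inter>l\<in>layer_nodes k d. {z. ?\<sigma> l = 0 \<or> 0 < ?\<sigma> l * pattern_node k l ?\<sigma> z})"
  have "open U" unfolding U_def
  proof (intro open_INT finite_layer_nodes ballI)
    fix l
    have "open {z. 0 < ?\<sigma> l * pattern_node k l ?\<sigma> z}"
      by (intro open_Collect_less[where f = "\<lambda>_. 0", simplified] continuous_intros continuous_pattern_node)
    then show "open {z. ?\<sigma> l = 0 \<or> 0 < ?\<sigma> l * pattern_node k l ?\<sigma> z}"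
      by (cases "?\<sigma> l = 0") auto
  qed
  have yS: "y \<in> ?S" using mem_sign_cell[OF y(1), of d] y(2) by simp
  have "?\<sigma> l = 0 \<or> 0 < ?\<sigma> l * pattern_node k l ?\<sigma> y" if l: "l \<in> layer_nodes k d" for l
  proof -
    have "?\<sigma> l = sgn (node_val k l y)" using fun_cong[OF y(2), of l] l by (simp add: sign_vec_def)
    then show ?thesis using pattern_cell_node_val[OF yS l] by (auto simp: sgn_real_def)
  qed
  then have "y \<in> U" by (simp add: U_def)
  moreover have "U \<inter> affine hull ?S \<subseteq> ?S"
  proof
    fix z assume z: "z \<in> U \<inter> affine hull ?S"
    then have "z \<in> affine hull ?S" by blast
    then have "z \<in> {z \<in> vspace (n (k - 1)). \<forall>l\<in>zero_nodes k d x. pattern_node k l ?\<sigma> z = 0}"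
      by (rule subsetD[OF affine_hull_sign_cell_subset])
    then have z1: "z \<in> vspace (n (k - 1))" "\<forall>l\<in>zero_nodes k d x. pattern_node k l ?\<sigma> z = 0"
      by auto
    have "sign_compat (?\<sigma> l) (pattern_node k l ?\<sigma> z)" if l: "l \<in> layer_nodes k d" for l
    proof (cases "?\<sigma> l = 0")
      case True
      then have "l \<in> zero_nodes k d x" using l by (auto simp: zero_nodes_def sign_vec_def sgn_0_0)
      then show ?thesis using z1 by (simp add: sign_compat_zero)
    next
      case False
      then have "0 < ?\<sigma> l * pattern_node k l ?\<sigma> z" using z l by (auto simp: U_def)
      then show ?thesis by (auto simp: sign_compat_def zero_less_mult_iff)
    qed
    then show "z \<in> ?S" using z1 by (simp add: mem_pattern_cell_iff)
  qed
  ultimately show ?thesis using \<open>open U\<close> yS by (auto simp: rel_interior)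
qed

text \<open>Moving from y away from x stays in the cell for a while, but there node l would have the
  sign opposite to that of x.\<close>

lemma node_val_eq_zero_if_rel_interior:
  assumes x: "x \<in> vspace (n (k - 1))" and yr: "y \<in> rel_interior (sign_cell k d x)"
    and l: "l \<in> layer_nodes k d" and yz: "node_val k l y = 0"
  shows "node_val k l x = 0"
proof (rule ccontr)
  assume xnz: "node_val k l x \<noteq> 0"
  let ?\<sigma> = "sign_vec k d x" and ?S = "sign_cell k d x"
  obtain T where T: "y \<in> ?S" "open T" "y \<in> T" "T \<inter> affine hull ?S \<subseteq> ?S"
    using yr by (auto simp: rel_interior)
  have xS: "x \<in> ?S" using mem_sign_cell[OF x] .
  define p where "p t = (1 + t) *\<^sub>R y + (- t) *\<^sub>R x" for t :: real
  have "continuous_on UNIV p"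
    unfolding p_def by (intro continuous_on_coordinatewise_then_product) (auto intro!: continuous_intros)
  then have "open (p -` T)" using continuous_on_open_vimage[of UNIV p] T(2) by auto
  moreover have "0 \<in> p -` T" using T(3) by (simp add: p_def)
  ultimately obtain e where e: "e > 0" "\<forall>t. dist t 0 < e \<longrightarrow> t \<in> p -` T"
    by (metis open_dist)
  let ?t = "e / 2"
  have "p ?t \<in> T" using e by simp
  moreover have "p ?t \<in> affine hull ?S"
    unfolding p_def by (rule mem_affine[OF affine_affine_hull]) (use T(1) xS in \<open>auto intro: hull_inc\<close>)
  ultimately have pS: "p ?t \<in> ?S" using T(4) by blast
  have sl: "snd l < n (fst l)" using l by (auto simp: layer_nodes_def)
  have "node_val k l (p ?t) = pattern_node k l ?\<sigma> (p ?t)"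
    using pattern_cell_node_val[OF pS l] .
  also have "\<dots> = (1 + ?t) * pattern_node k l ?\<sigma> y + (- ?t) * pattern_node k l ?\<sigma> x"
    unfolding p_def by (rule pattern_node_affine_comb[OF sl]) simp
  also have "\<dots> = - ?t * node_val k l x"
    using pattern_cell_node_val[OF T(1) l] pattern_cell_node_val[OF xS l] yz by simp
  finally have "node_val k l (p ?t) = - ?t * node_val k l x" .
  moreover have "sign_compat (sgn (node_val k l x)) (node_val k l (p ?t))"
    using pS l by (simp add: pattern_cell_def sign_vec_def)
  ultimately show False
    using not_sign_compat_sgn_neg[OF xnz, of ?t] \<open>e > 0\<close> by simp
qed

lemma rel_interior_subset_sign_class:
  assumes x: "x \<in> vspace (n (k - 1))" and yr: "y \<in> rel_interior (sign_cell k d x)"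
  shows "sign_vec k d y = sign_vec k d x"
proof
  fix l
  have yS: "y \<in> sign_cell k d x" using yr rel_interior_subset by blast
  show "sign_vec k d y l = sign_vec k d x l"
  proof (cases "l \<in> layer_nodes k d")
    case False
    then show ?thesis by (simp add: sign_vec_def)
  next
    case l: True
    show ?thesis
    proof (cases "node_val k l y = 0")
      case False
      moreover have "sign_compat (sgn (node_val k l x)) (node_val k l y)"
        using yS l by (simp add: pattern_cell_def sign_vec_def)
      ultimately show ?thesis using sign_compat_sgn_eq l by (simp add: sign_vec_def)
    next
      case True
      then show ?thesis using node_val_eq_zero_if_rel_interior[OF x yr l] l by (simp add: sign_vec_def)
    qed
  qed
qed

lemma rel_interior_sign_cell:
  assumes x: "x \<in> vspace (n (k - 1))"
  shows "rel_interior (sign_cell k d x) = {y \<in> vspace (n (k - 1)). sign_vec k d y = sign_vec k d x}"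
proof
  show "rel_interior (sign_cell k d x) \<subseteq> {y \<in> vspace (n (k - 1)). sign_vec k d y = sign_vec k d x}"
  proof
    fix y assume y: "y \<in> rel_interior (sign_cell k d x)"
    then have "y \<in> sign_cell k d x" using rel_interior_subset by blast
    then show "y \<in> {y \<in> vspace (n (k - 1)). sign_vec k d y = sign_vec k d x}"
      using rel_interior_subset_sign_class[OF x y] by (simp add: pattern_cell_def)
  qed
next
  show "{y \<in> vspace (n (k - 1)). sign_vec k d y = sign_vec k d x} \<subseteq> rel_interior (sign_cell k d x)"
  proof
    fix y assume "y \<in> {y \<in> vspace (n (k - 1)). sign_vec k d y = sign_vec k d x}"
    then show "y \<in> rel_interior (sign_cell k d x)" by (intro sign_class_subset_rel_interior) auto
  qed
qed

lemma tangent_sign_cell: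
  assumes x: "x \<in> vspace (n (k - 1))"
  shows "tangent (sign_cell k d x) = cell_dirs k d x"
proof
  let ?\<sigma> = "sign_vec k d x" and ?S = "sign_cell k d x"
  show "tangent ?S \<subseteq> cell_dirs k d x"
    unfolding tangent_def
  proof (rule span_minimal[OF _ subspace_cell_dirs], clarify)
    fix y z assume y: "y \<in> ?S" and z: "z \<in> ?S"
    have "pattern_node_lin k l ?\<sigma> (y - z) = 0" if l: "l \<in> zero_nodes k d x" for l
    proof -
      have l': "l \<in> layer_nodes k d" and sl: "snd l < n (fst l)"
        using l by (auto simp: zero_nodes_def layer_nodes_def)
      have "node_val k l y = 0" "node_val k l z = 0"
        using zero_nodes_subset_if_mem_sign_cell[OF y] zero_nodes_subset_if_mem_sign_cell[OF z] l
        by (auto simp: zero_nodes_def)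
      then show ?thesis
        using pattern_node_diff[OF sl, of k ?\<sigma> y z] pattern_cell_node_val[OF y l'] pattern_cell_node_val[OF z l']
        by simp
    qed
    moreover have "y - z \<in> vspace (n (k - 1))" using y z by (auto simp: pattern_cell_def vspace_def)
    ultimately show "y - z \<in> cell_dirs k d x" by (simp add: cell_dirs_def common_kernel_def)
  qed
next
  let ?\<sigma> = "sign_vec k d x" and ?S = "sign_cell k d x"
  show "cell_dirs k d x \<subseteq> tangent ?S"
  proof
    fix v assume v: "v \<in> cell_dirs k d x"
    have vv: "v \<in> vspace (n (k - 1))" using v cell_dirs_subset_vspace by blast
    have ref: "\<forall>l\<in>layer_nodes k d. node_val k l x \<noteq> 0 \<longrightarrow> ?\<sigma> l = sgn (node_val k l x)"
      by (simp add: sign_vec_def)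
    have dir: "\<forall>l\<in>layer_nodes k d. node_val k l x = 0 \<longrightarrow> sgn (pattern_node_lin k l ?\<sigma> v) = ?\<sigma> l"
      using cell_dirs_zero[OF v] by (simp add: zero_nodes_def sign_vec_def)
    obtain e where e: "e > 0" "x + e *\<^sub>R v \<in> ?S"
      using perturb_into_pattern[OF x vv ref dir] by blast
    have "(x + e *\<^sub>R v) - x \<in> {y - z |y z. y \<in> ?S \<and> z \<in> ?S}"
      using e(2) mem_sign_cell[OF x] by blast
    then have "(1 / e) *\<^sub>R ((x + e *\<^sub>R v) - x) \<in> tangent ?S"
      unfolding tangent_def by (intro span_scale span_base)
    then show "v \<in> tangent ?S" using e(1) by simp
  qed
qed

definition layer_signs :: "(nat \<times> nat \<Rightarrow> real) \<Rightarrow> nat \<Rightarrow> nat \<Rightarrow> int" where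
  "layer_signs \<tau> i j = (if \<tau> (i, j) > 0 then 1 else if \<tau> (i, j) < 0 then -1 else 0)"

lemma arr_cell_cong: "(\<And>j. j < n i \<Longrightarrow> \<rho> j = \<rho>' j) \<Longrightarrow> arr_cell n W b i \<rho> = arr_cell n W b i \<rho>'"
  by (auto simp: arr_cell_def)

lemma pattern_cell_cong: "(\<And>l. l \<in> layer_nodes k d \<Longrightarrow> \<tau> l = \<tau>' l) \<Longrightarrow> pattern_cell k d \<tau> = pattern_cell k d \<tau>'"
  by (auto simp: pattern_cell_def)

lemma arr_cell_layer_signs_in_arrangement:
  assumes "arr_cell n W b i (layer_signs \<tau> i) \<noteq> {}"
  shows "arr_cell n W b i (layer_signs \<tau> i) \<in> arrangement n W b i"
proof -
  have "\<forall>j<n i. layer_signs \<tau> i j \<in> {-1, 0, 1}" by (simp add: layer_signs_def)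
  then show ?thesis using assms unfolding arrangement_def by blast
qed

lemma pattern_cell_Suc:
  "pattern_cell k (Suc d) \<tau> =
     pattern_cell k d \<tau> \<inter> apply_layers n W b k d -` arr_cell n W b (k + d) (layer_signs \<tau> (k + d))"
proof -
  have compat: "sign_compat (\<tau> (i, j)) v \<longleftrightarrow>
      (layer_signs \<tau> i j = 1 \<longrightarrow> v \<ge> 0) \<and> (layer_signs \<tau> i j = -1 \<longrightarrow> v \<le> 0) \<and> (layer_signs \<tau> i j = 0 \<longrightarrow> v = 0)"
    for i j v by (auto simp: layer_signs_def sign_compat_def)
  have "x \<in> pattern_cell k (Suc d) \<tau> \<longleftrightarrow>
      x \<in> pattern_cell k d \<tau> \<and> (\<forall>j<n (k + d). sign_compat (\<tau> (k + d, j)) (node_val k (k + d, j) x))" for x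
    by (auto simp: pattern_cell_def layer_nodes_def less_Suc_eq)
  then show ?thesis
    unfolding arr_cell_def using apply_layers_in_vspace compat
    by (auto simp: pattern_cell_def node_val_def)
qed

lemma arr_cell_eq_pattern_cell: "arr_cell n W b k (layer_signs \<tau> k) = pattern_cell k 1 \<tau>"
proof -
  have "pattern_cell k 0 \<tau> = vspace (n (k - 1))" by (auto simp: pattern_cell_def layer_nodes_def)
  moreover have "arr_cell n W b k (layer_signs \<tau> k) \<subseteq> vspace (n (k - 1))" by (auto simp: arr_cell_def)
  ultimately show ?thesis using pattern_cell_Suc[of k 0 \<tau>] by auto
qed

lemma canon_from_eq_pattern_cells: "canon_from n W b k d = {pattern_cell k d \<tau> | \<tau>. pattern_cell k d \<tau> \<noteq> {}}"
proof (induction d)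
  case 0
  have "pattern_cell k 0 \<tau> = vspace (n (k - 1))" for \<tau> by (auto simp: pattern_cell_def layer_nodes_def)
  moreover have "vspace (n (k - 1)) \<noteq> {}" by (auto simp: vspace_def)
  ultimately show ?case by auto
next
  case (Suc d)
  show ?case
  proof
    show "canon_from n W b k (Suc d) \<subseteq> {pattern_cell k (Suc d) \<tau> | \<tau>. pattern_cell k (Suc d) \<tau> \<noteq> {}}"
    proof
      fix X assume "X \<in> canon_from n W b k (Suc d)"
      then obtain \<tau> \<rho> where X: "X = pattern_cell k d \<tau> \<inter> apply_layers n W b k d -` arr_cell n W b (k + d) \<rho>"
        "\<forall>j<n (k + d). \<rho> j \<in> {-1, 0, 1}" "X \<noteq> {}"
        using Suc.IH by (auto simp: arrangement_def)
      define \<tau>' where "\<tau>' l = (if fst l = k + d then of_int (\<rho> (snd l)) else \<tau> l)" for l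
      have "pattern_cell k d \<tau>' = pattern_cell k d \<tau>"
        by (rule pattern_cell_cong) (auto simp: \<tau>'_def layer_nodes_def)
      moreover have "arr_cell n W b (k + d) (layer_signs \<tau>' (k + d)) = arr_cell n W b (k + d) \<rho>"
        by (rule arr_cell_cong) (use X(2) in \<open>auto simp: layer_signs_def \<tau>'_def\<close>)
      ultimately have "X = pattern_cell k (Suc d) \<tau>'" using pattern_cell_Suc[of k d \<tau>'] X(1) by simp
      then show "X \<in> {pattern_cell k (Suc d) \<tau> | \<tau>. pattern_cell k (Suc d) \<tau> \<noteq> {}}" using X(3) by auto
    qed
  next
    show "{pattern_cell k (Suc d) \<tau> | \<tau>. pattern_cell k (Suc d) \<tau> \<noteq> {}} \<subseteq> canon_from n W b k (Suc d)"
    proof clarify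
      fix \<tau> assume ne: "pattern_cell k (Suc d) \<tau> \<noteq> {}"
      have eq: "pattern_cell k (Suc d) \<tau> =
          pattern_cell k d \<tau> \<inter> apply_layers n W b k d -` arr_cell n W b (k + d) (layer_signs \<tau> (k + d))"
        by (rule pattern_cell_Suc)
      have "pattern_cell k d \<tau> \<in> canon_from n W b k d" using Suc.IH ne eq by auto
      moreover have "arr_cell n W b (k + d) (layer_signs \<tau> (k + d)) \<in> arrangement n W b (k + d)"
        using ne eq by (intro arr_cell_layer_signs_in_arrangement) auto
      ultimately show "pattern_cell k (Suc d) \<tau> \<in> canon_from n W b k (Suc d)"
        using ne unfolding canon_from.simps eq by blast
    qed
  qed
qed

lemma tangent_hyperplane_nodes:
  assumes J: "J \<subseteq> {..<n i}" and ne: "hyperplane_nodes n W b i J \<noteq> {}"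
  shows "tangent (hyperplane_nodes n W b i J) = common_kernel (n (i - 1)) (\<lambda>j v. lin_layer i v j) J"
proof
  let ?H = "hyperplane_nodes n W b i J" and ?K = "common_kernel (n (i - 1)) (\<lambda>j v. lin_layer i v j) J"
  have H: "?H = {x \<in> vspace (n (i - 1)). \<forall>j\<in>J. lin_layer i x j + b i j = 0}"
    using J by (auto simp: hyperplane_nodes_def aff_layer_eq)
  show "tangent ?H \<subseteq> ?K"
    unfolding tangent_def
  proof (rule span_minimal, clarify)
    fix y z assume y: "y \<in> ?H" and z: "z \<in> ?H"
    have "lin_layer i (y - z) j = 0" if "j \<in> J" for j
    proof -
      have "lin_layer i y j + b i j = 0" "lin_layer i z j + b i j = 0" using y z that unfolding H by auto
      then show ?thesis using linear_diff[OF linear_lin_layer[of i j], of y z] by simp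
    qed
    moreover have "y - z \<in> vspace (n (i - 1))" using y z unfolding H by (auto simp: vspace_def)
    ultimately show "y - z \<in> ?K" by (simp add: common_kernel_def)
  qed (rule subspace_common_kernel, rule linear_lin_layer)
  show "?K \<subseteq> tangent ?H"
  proof
    fix v assume v: "v \<in> ?K"
    obtain p where p: "p \<in> ?H" using ne by auto
    have "p + v \<in> ?H" using p v unfolding H by (auto simp: common_kernel_def vspace_def lin_layer_add)
    then have "(p + v) - p \<in> {y - z |y z. y \<in> ?H \<and> z \<in> ?H}" using p by blast
    then show "v \<in> tangent ?H" unfolding tangent_def by (auto intro: span_base)
  qed
qed

section \<open>Joint surjectivity of the vanishing node maps\<close>

lemma lin_layer_surj:
  assumes gen: "generic_net m n W b" and i: "i \<in> {1..m+1}" and J: "J \<subseteq> {..<n i}"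
    and ne: "hyperplane_nodes n W b i J \<noteq> {}"
  shows "\<exists>v\<in>vspace (n (i - 1)). \<forall>j\<in>J. lin_layer i v j = c j"
proof (rule surj_if_dim_common_kernel_add_card)
  show "finite J" using J finite_subset by blast
  show "linear (\<lambda>v. lin_layer i v j)" for j by (rule linear_lin_layer)
  fix J' assume J': "J' \<subseteq> J"
  have ne': "hyperplane_nodes n W b i J' \<noteq> {}"
    using ne J' by (auto simp: hyperplane_nodes_def)
  have J'n: "J' \<subseteq> {..<n i}" using J J' by auto
  then have "card J' \<le> n (i - 1) \<and> affdim (hyperplane_nodes n W b i J') = n (i - 1) - card J'"
    using gen i ne' unfolding generic_net_def by (meson not_le)
  then show "dim (common_kernel (n (i - 1)) (\<lambda>j v. lin_layer i v j) J') + card J' = n (i - 1)"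
    unfolding affdim_def tangent_hyperplane_nodes[OF J'n ne'] by simp
qed

lemma lin_layer_surj_at_zeros:
  assumes "generic_net m n W b" "i \<in> {1..m+1}" "x \<in> vspace (n (i - 1))"
  shows "\<exists>v\<in>vspace (n (i - 1)). \<forall>j<n i. aff_layer n W b i x j = 0 \<longrightarrow> lin_layer i v j = c j"
proof -
  let ?J = "{j. j < n i \<and> aff_layer n W b i x j = 0}"
  have "x \<in> hyperplane_nodes n W b i ?J" using assms(3) by (simp add: hyperplane_nodes_def)
  then show ?thesis using lin_layer_surj[OF assms(1,2), of ?J c] by auto
qed

definition extends_signs :: "nat \<Rightarrow> nat \<Rightarrow> (nat \<Rightarrow> real) \<Rightarrow> (nat \<times> nat \<Rightarrow> real) \<Rightarrow> bool" where
  "extends_signs k d x \<tau> \<longleftrightarrow> (\<forall>l\<in>layer_nodes k d. node_val k l x \<noteq> 0 \<longrightarrow> \<tau> l = sgn (node_val k l x))"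

lemma extends_signs_sign_vec: "extends_signs k d x (sign_vec k d x)"
  by (simp add: extends_signs_def sign_vec_def)

lemma pattern_lin_refine:
  assumes t: "t \<in> cell_dirs k d y" and ref: "extends_signs k d y \<tau>" and e: "e \<le> d"
  shows "pattern_lin k e \<tau> t = pattern_lin k e (sign_vec k d y) t"
  using e
proof (induction e)
  case (Suc e)
  let ?\<sigma> = "sign_vec k d y"
  have IH: "pattern_lin k e \<tau> t = pattern_lin k e ?\<sigma> t" using Suc by simp
  have rows: "pattern_lin k (Suc e) \<tau> t j = pattern_lin k (Suc e) ?\<sigma> t j" if j: "j < n (k + e)" for j
  proof -
    have l: "(k + e, j) \<in> layer_nodes k d" using Suc.prems j by (auto simp: layer_nodes_def)
    show ?thesis
    proof (cases "node_val k (k + e, j) y = 0")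
      case False
      then show ?thesis using ref l IH by (simp add: extends_signs_def sign_vec_def)
    next
      case True
      then have "pattern_node_lin k (k + e, j) ?\<sigma> t = 0"
        using l cell_dirs_zero[OF t] by (simp add: zero_nodes_def)
      then show ?thesis using IH by (simp add: pattern_node_lin_def)
    qed
  qed
  show ?case
  proof
    fix j
    show "pattern_lin k (Suc e) \<tau> t j = pattern_lin k (Suc e) ?\<sigma> t j"
    proof (cases "j < n (k + e)")
      case True
      then show ?thesis by (rule rows)
    qed simp
  qed
qed simp

lemma pattern_node_lin_refine:
  assumes "t \<in> cell_dirs k d y" "extends_signs k d y \<tau>" "l \<in> layer_nodes k d"
  shows "pattern_node_lin k l \<tau> t = pattern_node_lin k l (sign_vec k d y) t"
  using pattern_lin_refine[OF assms(1,2), of "fst l - k"] assms(3)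
  by (auto simp: pattern_node_lin_def layer_nodes_def)

lemma dlayer_eq_pattern_lin:
  assumes ref: "\<forall>j<n k. aff_layer n W b k x j \<noteq> 0 \<longrightarrow> \<tau> (k, j) = sgn (aff_layer n W b k x j)"
    and w: "\<forall>j<n k. aff_layer n W b k x j = 0 \<longrightarrow> lin_layer k w j = 0"
  shows "dlayer n W b k x w = pattern_lin k 1 \<tau> w"
proof
  fix j
  show "dlayer n W b k x w j = pattern_lin k 1 \<tau> w j"
    using ref w by (cases "j < n k \<and> aff_layer n W b k x j \<noteq> 0")
      (auto simp: dlayer_def lin_layer_def sgn_real_def)
qed

definition zero_nodes_surj :: "nat \<Rightarrow> nat \<Rightarrow> bool" where
  "zero_nodes_surj k d \<longleftrightarrow> (\<forall>x\<in>vspace (n (k - 1)). \<forall>\<tau>. extends_signs k d x \<tau> \<longrightarrow>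
     (\<forall>c. \<exists>v\<in>vspace (n (k - 1)). \<forall>l\<in>zero_nodes k d x. pattern_node_lin k l \<tau> v = c l))"

lemma zero_nodes_surj_one_layer:
  assumes gen: "generic_net m n W b" and k: "k \<in> {1..m+1}"
  shows "zero_nodes_surj k 1"
  unfolding zero_nodes_surj_def
proof (intro ballI allI impI)
  fix x \<tau> c assume x: "x \<in> vspace (n (k - 1))"
  obtain v where v: "v \<in> vspace (n (k - 1))" "\<forall>j<n k. aff_layer n W b k x j = 0 \<longrightarrow> lin_layer k v j = c (k, j)"
    using lin_layer_surj_at_zeros[OF gen k x, where c = "\<lambda>j. c (k, j)"] by blast
  have "pattern_node_lin k l \<tau> v = c l" if l: "l \<in> zero_nodes k 1 x" for l
  proof -
    have "l \<in> layer_nodes k 1" and l0: "node_val k l x = 0" using l by (auto simp: zero_nodes_def)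
    then obtain j where j: "l = (k, j)" "j < n k" by (cases l) (auto simp: layer_nodes_def le_less_Suc_eq)
    then have "aff_layer n W b k x j = 0" using l0 by (simp add: node_val_first)
    then show ?thesis using v j by (simp add: pattern_node_lin_first)
  qed
  then show "\<exists>v\<in>vspace (n (k - 1)). \<forall>l\<in>zero_nodes k 1 x. pattern_node_lin k l \<tau> v = c l"
    using v(1) by blast
qed

text \<open>The only use of supertransversality: at the cell of x in R^(k) and the cell of its image
  in the complex of the remaining layers.\<close>

lemma supertransversal_decomposition:
  assumes st: "supertransversal m n W b" and k: "k \<in> {1..m}" and kd: "Suc k + d = m + 2"
    and x: "x \<in> vspace (n (k - 1))" and u: "u \<in> vspace (n k)"
  obtains w' w where "u = dlayer n W b k x w' + w" "w' \<in> cell_dirs k 1 x"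
    "w \<in> cell_dirs (Suc k) d (relu_layer n W b k x)"
proof -
  let ?y = "relu_layer n W b k x"
  have yv: "?y \<in> vspace (n (Suc k - 1))" using relu_layer_in_vspace by simp
  define C where "C = arr_cell n W b k (layer_signs (sign_vec k 1 x) k)"
  define D where "D = sign_cell (Suc k) d ?y"
  have CS: "C = sign_cell k 1 x" unfolding C_def by (rule arr_cell_eq_pattern_cell)
  have "C \<in> arrangement n W b k"
    using arr_cell_layer_signs_in_arrangement[of k "sign_vec k 1 x"] CS mem_sign_cell[OF x, of 1]
    unfolding C_def by auto
  moreover have "D \<in> canon_from n W b (k + 1) (m + 1 - k)"
  proof -
    have "m + 1 - k = d" using kd by simp
    then show ?thesis
      using mem_sign_cell[OF yv, of d] canon_from_eq_pattern_cells[of "Suc k" d] unfolding D_def by auto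
  qed
  ultimately have "transverse_on n W b k C D" using st k unfolding supertransversal_def by blast
  moreover have "x \<in> rel_interior C" using rel_interior_sign_cell[OF x, of 1] CS x by simp
  moreover have "?y \<in> rel_interior D" using rel_interior_sign_cell[OF yv, of d] yv unfolding D_def by simp
  ultimately have "{a + w | a w. a \<in> dlayer n W b k x ` tangent C \<and> w \<in> tangent D} = vspace (n k)"
    unfolding transverse_on_def by blast
  then obtain w' w where "u = dlayer n W b k x w' + w" "w' \<in> tangent C" "w \<in> tangent D"
    using u by blast
  then show ?thesis
    using that tangent_sign_cell[OF x, of 1] tangent_sign_cell[OF yv, of d] CS unfolding D_def by auto
qed

lemma extends_signs_Suc_first:
  assumes "extends_signs k (Suc d) x \<tau>"
  shows "extends_signs (Suc k) d (relu_layer n W b k x) \<tau>"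
  unfolding extends_signs_def
proof (intro ballI impI)
  fix l assume l: "l \<in> layer_nodes (Suc k) d" and nz: "node_val (Suc k) l (relu_layer n W b k x) \<noteq> 0"
  have "node_val (Suc k) l (relu_layer n W b k x) = node_val k l x"
    using node_val_Suc_first[of k l x] l by (simp add: layer_nodes_def)
  moreover have "l \<in> layer_nodes k (Suc d)" using l layer_nodes_Suc_first by blast
  ultimately show "\<tau> l = sgn (node_val (Suc k) l (relu_layer n W b k x))"
    using assms nz by (simp add: extends_signs_def)
qed

text \<open>Induction step, from the back of the network: solve the constraints of layer k first, then
  correct the deeper layers by a vector of the form dlayer w' + w that transversality provides;
  w' does not disturb layer k and w does not disturb the deeper layers.\<close>

lemma zero_nodes_surj_Suc:
  assumes gen: "generic_net m n W b" and st: "supertransversal m n W b"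
    and k: "k \<in> {1..m}" and kd: "Suc k + d = m + 2" and IH: "zero_nodes_surj (Suc k) d"
  shows "zero_nodes_surj k (Suc d)"
  unfolding zero_nodes_surj_def
proof (intro ballI allI impI)
  fix x \<tau> c assume x: "x \<in> vspace (n (k - 1))" and ref: "extends_signs k (Suc d) x \<tau>"
  let ?y = "relu_layer n W b k x"
  have yv: "?y \<in> vspace (n (Suc k - 1))" using relu_layer_in_vspace by simp
  obtain v0 where v0: "v0 \<in> vspace (n (k - 1))"
    "\<forall>j<n k. aff_layer n W b k x j = 0 \<longrightarrow> lin_layer k v0 j = c (k, j)"
    using lin_layer_surj_at_zeros[OF gen _ x, where c = "\<lambda>j. c (k, j)"] k by auto
  define c' where "c' l = c l - pattern_node_lin (Suc k) l \<tau> (pattern_lin k 1 \<tau> v0)" for l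
  obtain u where u: "u \<in> vspace (n k)" "\<forall>l\<in>zero_nodes (Suc k) d ?y. pattern_node_lin (Suc k) l \<tau> u = c' l"
    using IH[unfolded zero_nodes_surj_def, rule_format, OF yv extends_signs_Suc_first[OF ref], of c'] by auto
  obtain w' w where ww: "u = dlayer n W b k x w' + w" "w' \<in> cell_dirs k 1 x" "w \<in> cell_dirs (Suc k) d ?y"
    using supertransversal_decomposition[OF st k kd x u(1)] by blast
  have w'0: "lin_layer k w' j = 0" if "j < n k" "aff_layer n W b k x j = 0" for j
    using cell_dirs_zero[OF ww(2), of "(k, j)"] that
    by (simp add: zero_nodes_def layer_nodes_def node_val_first pattern_node_lin_first sign_vec_def)
  have "dlayer n W b k x w' = pattern_lin k 1 \<tau> w'"
    using ref w'0 by (intro dlayer_eq_pattern_lin) (auto simp: extends_signs_def layer_nodes_def node_val_first)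
  then have lin_u: "pattern_node_lin (Suc k) l \<tau> u = pattern_node_lin (Suc k) l \<tau> (pattern_lin k 1 \<tau> w')"
    if "l \<in> zero_nodes (Suc k) d ?y" for l
    using ww(1) pattern_node_lin_refine[OF ww(3) extends_signs_Suc_first[OF ref]] cell_dirs_zero[OF ww(3) that] that
    by (simp add: linear_add[OF linear_pattern_node_lin] zero_nodes_def)
  have "pattern_node_lin k l \<tau> (v0 + w') = c l" if l: "l \<in> zero_nodes k (Suc d) x" for l
  proof (cases "fst l = k")
    case True
    have "l \<in> layer_nodes k (Suc d)" and l0: "node_val k l x = 0" using l by (auto simp: zero_nodes_def)
    then obtain j where j: "l = (k, j)" "j < n k" using True by (cases l) (auto simp: layer_nodes_def)
    then have "aff_layer n W b k x j = 0" using l0 by (simp add: node_val_first)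
    then show ?thesis using v0 w'0 j by (simp add: pattern_node_lin_first lin_layer_add)
  next
    case False
    then have kl: "k < fst l" and l': "l \<in> zero_nodes (Suc k) d ?y"
      using l node_val_Suc_first[of k l x] by (auto simp: zero_nodes_def layer_nodes_def)
    show ?thesis
      using pattern_node_lin_Suc_first[OF kl] u(2) l' lin_u[OF l']
      by (simp add: pattern_lin_add linear_add[OF linear_pattern_node_lin] c'_def)
  qed
  moreover have "v0 + w' \<in> vspace (n (k - 1))"
    using v0(1) ww(2) cell_dirs_subset_vspace by (fastforce simp: vspace_def)
  ultimately show "\<exists>v\<in>vspace (n (k - 1)). \<forall>l\<in>zero_nodes k (Suc d) x. pattern_node_lin k l \<tau> v = c l"
    by blast
qed

lemma zero_nodes_surj_generic:
  assumes gen: "generic_net m n W b" and st: "supertransversal m n W b"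
  shows "k + d = m + 2 \<Longrightarrow> 1 \<le> k \<Longrightarrow> 1 \<le> d \<Longrightarrow> zero_nodes_surj k d"
proof (induction d arbitrary: k)
  case (Suc d)
  show ?case
  proof (cases "d = 0")
    case True
    then show ?thesis using zero_nodes_surj_one_layer[OF gen] Suc.prems by auto
  next
    case False
    then have "zero_nodes_surj (Suc k) d" using Suc.IH[of "Suc k"] Suc.prems by simp
    moreover have "k \<in> {1..m}" using Suc.prems False by auto
    ultimately show ?thesis using zero_nodes_surj_Suc[OF gen st] Suc.prems by simp
  qed
qed simp

section \<open>Dimension of the cells and vertices\<close>

lemma dim_cell_dirs_add_card_zero_nodes:
  assumes gen: "generic_net m n W b" and st: "supertransversal m n W b" and x: "x \<in> vspace (n 0)"
  shows "dim (cell_dirs 1 (m + 1) x) + card (zero_nodes 1 (m + 1) x) = n 0"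
proof -
  have "zero_nodes_surj 1 (m + 1)" using zero_nodes_surj_generic[OF gen st] by simp
  then have "\<exists>v\<in>vspace (n 0). \<forall>l\<in>zero_nodes 1 (m + 1) x. pattern_node_lin 1 l (sign_vec 1 (m + 1) x) v = c l" for c
    using x extends_signs_sign_vec unfolding zero_nodes_surj_def by simp
  then show ?thesis
    unfolding cell_dirs_def using dim_common_kernel_add_card[OF finite_zero_nodes linear_pattern_node_lin] by simp
qed

lemma first_layer_injective:
  assumes gen: "generic_net m n W b" and n01: "n 0 \<le> n 1" and v: "v \<in> vspace (n 0)" "v \<noteq> 0"
  obtains j where "j < n 0" "lin_layer 1 v j \<noteq> 0"
proof -
  let ?H = "hyperplane_nodes n W b 1 {..<n 0}"
  have J: "{..<n 0} \<subseteq> {..<n 1}" using n01 by auto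
  have "1 \<in> {1..m + 1}" by simp
  then have "card {..<n 0} \<le> n (1 - 1) \<longrightarrow> ?H \<noteq> {} \<and> affdim ?H = n (1 - 1) - card {..<n 0}"
    using gen J unfolding generic_net_def by blast
  then have ne: "?H \<noteq> {}" and "affdim ?H = 0" by auto
  then have "dim (common_kernel (n 0) (\<lambda>j v. lin_layer 1 v j) {..<n 0}) = 0"
    unfolding affdim_def tangent_hyperplane_nodes[OF J ne] by simp
  then have "v \<notin> common_kernel (n 0) (\<lambda>j v. lin_layer 1 v j) {..<n 0}"
    using dim_pos_iff_nonzero[OF common_kernel_subset_vspace] v(2) by (metis less_irrefl)
  then show ?thesis using that v(1) by (auto simp: common_kernel_def)
qed

lemma extends_signs_if_mem_sign_cell: "y \<in> sign_cell k d x \<Longrightarrow> extends_signs k d y (sign_vec k d x)"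
  unfolding extends_signs_def pattern_cell_def sign_vec_def using sign_compat_sgn_eq by auto

lemma extends_signs_trans:
  assumes "extends_signs k d z (sign_vec k d y)" "extends_signs k d y (sign_vec k d x)"
  shows "extends_signs k d z (sign_vec k d x)"
  unfolding extends_signs_def
proof (intro ballI impI)
  fix l assume l: "l \<in> layer_nodes k d" and nz: "node_val k l z \<noteq> 0"
  then have zy: "sgn (node_val k l y) = sgn (node_val k l z)"
    using assms(1) by (simp add: extends_signs_def sign_vec_def)
  then have "node_val k l y \<noteq> 0" using nz by (auto simp: sgn_0_0)
  then have "sgn (node_val k l x) = sgn (node_val k l y)"
    using assms(2) l by (simp add: extends_signs_def sign_vec_def)
  then show "sign_vec k d x l = sgn (node_val k l z)" using zy l by (simp add: sign_vec_def)
qed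

text \<open>Moving from x along a direction of its cell, the first node to vanish is one where the
  direction points towards zero, after the time t below.\<close>

lemma move_to_more_zero_nodes:
  assumes x: "x \<in> vspace (n (k - 1))" and v: "v \<in> cell_dirs k d x"
    and l0: "l0 \<in> layer_nodes k d" "node_val k l0 x * pattern_node_lin k l0 (sign_vec k d x) v < 0"
  obtains x' where "x' \<in> sign_cell k d x" "zero_nodes k d x \<subset> zero_nodes k d x'"
proof -
  let ?\<sigma> = "sign_vec k d x"
  let ?a = "\<lambda>l. node_val k l x" and ?c = "\<lambda>l. pattern_node_lin k l ?\<sigma> v"
  define B where "B = {l \<in> layer_nodes k d. ?a l * ?c l < 0}"
  define t where "t = Min ((\<lambda>l. \<bar>?a l\<bar> / \<bar>?c l\<bar>) ` B)"
  have finB: "finite B" using finite_layer_nodes by (simp add: B_def)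
  have "l0 \<in> B" using l0 by (simp add: B_def)
  then have "t \<in> (\<lambda>l. \<bar>?a l\<bar> / \<bar>?c l\<bar>) ` B" unfolding t_def using finB by (intro Min_in) auto
  then obtain ls where ls: "ls \<in> B" "t = \<bar>?a ls\<bar> / \<bar>?c ls\<bar>" by blast
  have t_le: "t * \<bar>?c l\<bar> \<le> \<bar>?a l\<bar>" if "l \<in> B" for l
  proof -
    have "t \<le> \<bar>?a l\<bar> / \<bar>?c l\<bar>" unfolding t_def using finB that by simp
    moreover have "?c l \<noteq> 0" using that by (auto simp: B_def)
    ultimately show ?thesis by (simp add: field_simps)
  qed
  have "?a ls \<noteq> 0" "?c ls \<noteq> 0" using ls(1) by (auto simp: B_def)
  then have "t > 0" using ls(2) by simp
  have xS: "x \<in> sign_cell k d x" using mem_sign_cell[OF x] .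
  let ?x' = "x + t *\<^sub>R v"
  have val: "pattern_node k l ?\<sigma> ?x' = ?a l + t * ?c l" if "l \<in> layer_nodes k d" for l
    using pattern_node_add_scaleR[of l k ?\<sigma> x t v] pattern_cell_node_val[OF xS that] that
    by (auto simp: layer_nodes_def)
  have "sign_compat (?\<sigma> l) (?a l + t * ?c l)" if l: "l \<in> layer_nodes k d" for l
  proof -
    have "?a l = 0 \<Longrightarrow> ?c l = 0" using cell_dirs_zero[OF v] l by (simp add: zero_nodes_def)
    moreover have "?a l * ?c l < 0 \<Longrightarrow> t * \<bar>?c l\<bar> \<le> \<bar>?a l\<bar>" using t_le l by (simp add: B_def)
    ultimately show ?thesis
      using sign_compat_sgn_add_scaled[of t "?a l" "?c l"] \<open>t > 0\<close> l by (simp add: sign_vec_def)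
  qed
  moreover have "?x' \<in> vspace (n (k - 1))"
  proof -
    have "v \<in> vspace (n (k - 1))" using v cell_dirs_subset_vspace by blast
    then show ?thesis using x by (auto simp: vspace_def)
  qed
  ultimately have x'S: "?x' \<in> sign_cell k d x"
    using val by (simp add: mem_pattern_cell_iff)
  have lsN: "ls \<in> layer_nodes k d" and "?a ls * ?c ls < 0" using ls(1) by (auto simp: B_def)
  then have "node_val k ls ?x' = 0"
    using pattern_cell_node_val[OF x'S lsN] val[OF lsN] add_scaled_eq_zero ls(2) by simp
  then have "ls \<in> zero_nodes k d ?x'" using lsN by (simp add: zero_nodes_def)
  moreover have "ls \<notin> zero_nodes k d x" using ls by (auto simp: B_def zero_nodes_def)
  ultimately have "zero_nodes k d x \<subset> zero_nodes k d ?x'"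
    using zero_nodes_subset_if_mem_sign_cell[OF x'S] by blast
  then show ?thesis using that x'S by blast
qed

lemma exists_direction_to_more_zero_nodes:
  assumes gen: "generic_net m n W b" and n01: "n 0 \<le> n 1"
    and x: "x \<in> vspace (n 0)" and pos: "0 < dim (cell_dirs 1 (m + 1) x)"
  obtains v l0 where "v \<in> cell_dirs 1 (m + 1) x" "l0 \<in> layer_nodes 1 (m + 1)"
    "node_val 1 l0 x * pattern_node_lin 1 l0 (sign_vec 1 (m + 1) x) v < 0"
proof -
  let ?\<sigma> = "sign_vec 1 (m + 1) x"
  obtain v where v: "v \<in> cell_dirs 1 (m + 1) x" "v \<noteq> 0"
    using pos dim_pos_iff_nonzero[OF cell_dirs_subset_vspace] by blast
  then have "v \<in> vspace (n 0)" using cell_dirs_subset_vspace by fastforce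
  then obtain j where j: "j < n 0" "lin_layer 1 v j \<noteq> 0" using first_layer_injective[OF gen n01] v(2) by blast
  let ?l0 = "(1::nat, j)"
  have l0: "?l0 \<in> layer_nodes 1 (m + 1)" using j n01 by (simp add: layer_nodes_def)
  have c: "pattern_node_lin 1 ?l0 ?\<sigma> v \<noteq> 0" using j by (simp add: pattern_node_lin_first)
  then have "node_val 1 ?l0 x \<noteq> 0" using cell_dirs_zero[OF v(1)] l0 by (auto simp: zero_nodes_def)
  then have "node_val 1 ?l0 x * pattern_node_lin 1 ?l0 ?\<sigma> v \<noteq> 0" using c by simp
  then consider "node_val 1 ?l0 x * pattern_node_lin 1 ?l0 ?\<sigma> v < 0"
    | "node_val 1 ?l0 x * pattern_node_lin 1 ?l0 ?\<sigma> (- v) < 0"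
    using linear_neg[OF linear_pattern_node_lin, of 1 ?l0 ?\<sigma> v] by force
  then show ?thesis
    using that l0 v(1) subspace_neg[OF subspace_cell_dirs] by cases blast+
qed

lemma reach_vertex:
  assumes gen: "generic_net m n W b" and st: "supertransversal m n W b" and n01: "n 0 \<le> n 1"
  shows "x \<in> vspace (n 0) \<Longrightarrow> \<exists>x'\<in>vspace (n 0).
    extends_signs 1 (m + 1) x' (sign_vec 1 (m + 1) x) \<and> card (zero_nodes 1 (m + 1) x') = n 0"
proof (induction "n 0 - card (zero_nodes 1 (m + 1) x)" arbitrary: x rule: less_induct)
  case less
  have df: "dim (cell_dirs 1 (m + 1) x) + card (zero_nodes 1 (m + 1) x) = n 0"
    using dim_cell_dirs_add_card_zero_nodes[OF gen st less.prems] .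
  show ?case
  proof (cases "dim (cell_dirs 1 (m + 1) x) = 0")
    case True
    then show ?thesis using less.prems df extends_signs_sign_vec by auto
  next
    case False
    then obtain v l0 where "v \<in> cell_dirs 1 (m + 1) x" "l0 \<in> layer_nodes 1 (m + 1)"
      "node_val 1 l0 x * pattern_node_lin 1 l0 (sign_vec 1 (m + 1) x) v < 0"
      using exists_direction_to_more_zero_nodes[OF gen n01 less.prems] by blast
    moreover have "x \<in> vspace (n (1 - 1))" using less.prems by simp
    ultimately obtain x' where x': "x' \<in> sign_cell 1 (m + 1) x"
      "zero_nodes 1 (m + 1) x \<subset> zero_nodes 1 (m + 1) x'"
      using move_to_more_zero_nodes by blast
    have x'v: "x' \<in> vspace (n 0)" using x'(1) by (simp add: pattern_cell_def)
    have "card (zero_nodes 1 (m + 1) x) < card (zero_nodes 1 (m + 1) x')"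
      using x'(2) finite_zero_nodes by (rule psubset_card_mono[rotated])
    moreover have "card (zero_nodes 1 (m + 1) x') \<le> n 0"
      using dim_cell_dirs_add_card_zero_nodes[OF gen st x'v] by simp
    ultimately have "n 0 - card (zero_nodes 1 (m + 1) x') < n 0 - card (zero_nodes 1 (m + 1) x)"
      using df by linarith
    then obtain x'' where "x'' \<in> vspace (n 0)"
      "extends_signs 1 (m + 1) x'' (sign_vec 1 (m + 1) x')" "card (zero_nodes 1 (m + 1) x'') = n 0"
      using less.hyps[OF _ x'v] by blast
    then show ?thesis
      using extends_signs_trans extends_signs_if_mem_sign_cell[OF x'(1)] by blast
  qed
qed

end

section \<open>Faces of the cube\<close>

lemma cube_subset_iff:
  assumes s: "\<forall>l. \<sigma> l \<in> {-1, 0, 1}" and t: "\<forall>l. \<tau> l \<in> {-1, 0, 1}"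
  shows "cube m n \<sigma> \<subseteq> cube m n \<tau> \<longleftrightarrow> (\<forall>l\<in>nodes m n. \<tau> l \<noteq> 0 \<longrightarrow> \<sigma> l = \<tau> l)"
proof
  assume sub: "cube m n \<sigma> \<subseteq> cube m n \<tau>"
  show "\<forall>l\<in>nodes m n. \<tau> l \<noteq> 0 \<longrightarrow> \<sigma> l = \<tau> l"
  proof (intro ballI impI, rule ccontr)
    fix l assume l: "l \<in> nodes m n" and tl: "\<tau> l \<noteq> 0" and ne: "\<sigma> l \<noteq> \<tau> l"
    text \<open>A vertex of the face of \<open>\<sigma>\<close> with coordinate \<open>-\<tau> l\<close> at l.\<close>
    define p where "p l' = (if l' \<in> nodes m n then (if \<sigma> l' \<noteq> 0 then \<sigma> l' else if l' = l then - \<tau> l else 0) else 0)"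
      for l'
    have bounds: "-1 \<le> p l' \<and> p l' \<le> 1" for l'
    proof -
      have "\<sigma> l' \<in> {-1, 0, 1}" "\<tau> l \<in> {-1, 0, 1}" using s t by blast+
      then show ?thesis unfolding p_def by auto
    qed
    have "p \<in> cube m n \<sigma>"
      unfolding cube_def mem_Collect_eq
    proof (intro conjI allI ballI impI)
      fix l' assume "l' \<notin> nodes m n"
      then show "p l' = 0" by (simp add: p_def)
    next
      fix l' show "-1 \<le> p l'" "p l' \<le> 1" using bounds[of l'] by blast+
    next
      fix l' assume "l' \<in> nodes m n" "\<sigma> l' \<noteq> 0"
      then show "p l' = \<sigma> l'" by (simp add: p_def)
    qed
    then have "p l = \<tau> l" using sub l tl by (auto simp: cube_def)
    moreover have "p l = \<sigma> l \<or> p l = - \<tau> l" using l by (simp add: p_def)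
    ultimately show False using ne tl by auto
  qed
next
  assume "\<forall>l\<in>nodes m n. \<tau> l \<noteq> 0 \<longrightarrow> \<sigma> l = \<tau> l"
  then show "cube m n \<sigma> \<subseteq> cube m n \<tau>" by (auto simp: cube_def)
qed

lemma cube_eq_imp_eq:
  assumes s: "\<sigma> \<in> sign_vectors m n" and t: "\<tau> \<in> sign_vectors m n" and eq: "cube m n \<sigma> = cube m n \<tau>"
  shows "\<sigma> = \<tau>"
proof
  fix l
  have s': "\<forall>l. \<sigma> l \<in> {-1, 0, 1}" and t': "\<forall>l. \<tau> l \<in> {-1, 0, 1}"
    using s t by (simp_all add: sign_vectors_def)
  have "\<forall>l\<in>nodes m n. \<tau> l \<noteq> 0 \<longrightarrow> \<sigma> l = \<tau> l" using cube_subset_iff[OF s' t', of m n] eq by simp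
  moreover have "\<forall>l\<in>nodes m n. \<sigma> l \<noteq> 0 \<longrightarrow> \<tau> l = \<sigma> l" using cube_subset_iff[OF t' s', of m n] eq by simp
  ultimately show "\<sigma> l = \<tau> l"
  proof (cases "l \<in> nodes m n")
    case False
    then have "\<sigma> l = 0" "\<tau> l = 0" using s t unfolding sign_vectors_def by blast+
    then show ?thesis by simp
  qed (metis)
qed

lemma sgn_sign_vector: "\<sigma> \<in> sign_vectors m n \<Longrightarrow> sgn (\<sigma> l) = \<sigma> l"
proof -
  assume "\<sigma> \<in> sign_vectors m n"
  then have "\<sigma> l \<in> {-1, 0, 1}" unfolding sign_vectors_def by blast
  then show ?thesis by auto
qed

context relu_net begin

lemma nodes_eq_layer_nodes: "nodes m n = layer_nodes 1 (m + 1)"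
  by (auto simp: nodes_def layer_nodes_def)

lemma sign_vec_in_sign_vectors: "sign_vec 1 (m + 1) x \<in> sign_vectors m n"
  by (auto simp: sign_vectors_def sign_vec_def sgn_real_def nodes_eq_layer_nodes)

lemma cube_subset_iff_extends_signs:
  "\<sigma> \<in> sign_vectors m n \<Longrightarrow>
     cube m n \<sigma> \<subseteq> cube m n (sign_vec 1 (m + 1) x) \<longleftrightarrow> extends_signs 1 (m + 1) x \<sigma>"
  using cube_subset_iff[of \<sigma> "sign_vec 1 (m + 1) x" m n] sign_vec_in_sign_vectors[of m x]
  by (auto simp: sign_vectors_def extends_signs_def sign_vec_def nodes_eq_layer_nodes sgn_0_0)

lemma cube_dim_sign_vec: "cube_dim m n (sign_vec 1 (m + 1) x) = card (zero_nodes 1 (m + 1) x)"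
proof -
  have "{l \<in> nodes m n. sign_vec 1 (m + 1) x l = 0} = zero_nodes 1 (m + 1) x"
    by (auto simp: nodes_eq_layer_nodes sign_vec_def zero_nodes_def sgn_0_0)
  then show ?thesis by (simp add: cube_dim_def)
qed

lemma canon_complex_iff: "C \<in> canon_complex m n W b \<longleftrightarrow> (\<exists>x\<in>vspace (n 0). C = sign_cell 1 (m + 1) x)"
proof
  assume "C \<in> canon_complex m n W b"
  then obtain \<tau> where C: "C = pattern_cell 1 (m + 1) \<tau>" "pattern_cell 1 (m + 1) \<tau> \<noteq> {}"
    unfolding canon_from_eq_pattern_cells by blast
  obtain x where x: "x \<in> pattern_cell 1 (m + 1) \<tau>" "pattern_cell 1 (m + 1) \<tau> = sign_cell 1 (m + 1) x"
    using pattern_cell_realized[OF C(2)] by blast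
  then have "x \<in> vspace (n 0)" by (simp add: pattern_cell_def)
  then show "\<exists>x\<in>vspace (n 0). C = sign_cell 1 (m + 1) x" using C(1) x(2) by blast
next
  assume "\<exists>x\<in>vspace (n 0). C = sign_cell 1 (m + 1) x"
  then obtain x where x: "x \<in> vspace (n 0)" "C = sign_cell 1 (m + 1) x" by blast
  have "x \<in> C" using mem_sign_cell[of x 1 "m + 1"] x by simp
  then show "C \<in> canon_complex m n W b" unfolding canon_from_eq_pattern_cells using x(2) by blast
qed

lemma sign_seq_eq_sign_vec: "sign_seq m n W b C = sign_vec 1 (m + 1) (SOME x. x \<in> rel_interior C)"
  unfolding sign_seq_def sign_vec_def node_map_def node_val_def nodes_eq_layer_nodes by (simp add: fun_eq_iff)

lemma sign_seq_sign_cell: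
  assumes x: "x \<in> vspace (n 0)"
  shows "sign_seq m n W b (sign_cell 1 (m + 1) x) = sign_vec 1 (m + 1) x"
proof -
  let ?S = "sign_cell 1 (m + 1) x"
  have ri: "rel_interior ?S = {y \<in> vspace (n 0). sign_vec 1 (m + 1) y = sign_vec 1 (m + 1) x}"
    using rel_interior_sign_cell[of x 1 "m + 1"] x by simp
  have "x \<in> rel_interior ?S" using ri x by simp
  then have "(SOME y. y \<in> rel_interior ?S) \<in> rel_interior ?S" by (rule someI[of "\<lambda>y. y \<in> rel_interior ?S"])
  then have "sign_vec 1 (m + 1) (SOME y. y \<in> rel_interior ?S) = sign_vec 1 (m + 1) x"
    unfolding ri by blast
  then show ?thesis by (simp only: sign_seq_eq_sign_vec)
qed

lemma canon_complex_cases: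
  assumes "C \<in> canon_complex m n W b"
  obtains x where "x \<in> vspace (n 0)" "C = sign_cell 1 (m + 1) x" "sign_seq m n W b C = sign_vec 1 (m + 1) x"
proof -
  obtain x where x: "x \<in> vspace (n 0)" "C = sign_cell 1 (m + 1) x" using assms canon_complex_iff by blast
  have "sign_seq m n W b C = sign_vec 1 (m + 1) x" unfolding x(2) using x(1) by (rule sign_seq_sign_cell)
  then show ?thesis using that x by blast
qed

lemma sign_vec_onto_extensions:
  assumes gen: "generic_net m n W b" and st: "supertransversal m n W b" and x: "x \<in> vspace (n 0)"
    and \<sigma>: "\<sigma> \<in> sign_vectors m n" and ext: "extends_signs 1 (m + 1) x \<sigma>"
  obtains x' where "x' \<in> vspace (n 0)" "sign_vec 1 (m + 1) x' = \<sigma>"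
proof -
  have surj: "zero_nodes_surj 1 (m + 1)" using zero_nodes_surj_generic[OF gen st] by simp
  have x1: "x \<in> vspace (n (1 - 1))" using x by simp
  obtain v where v: "v \<in> vspace (n (1 - 1))" "\<forall>l\<in>zero_nodes 1 (m + 1) x. pattern_node_lin 1 l \<sigma> v = \<sigma> l"
    using surj[unfolded zero_nodes_surj_def, rule_format, OF x1 ext, of \<sigma>] by blast
  have dir: "\<forall>l\<in>layer_nodes 1 (m + 1). node_val 1 l x = 0 \<longrightarrow> sgn (pattern_node_lin 1 l \<sigma> v) = \<sigma> l"
  proof (intro ballI impI)
    fix l assume "l \<in> layer_nodes 1 (m + 1)" "node_val 1 l x = 0"
    then have "l \<in> zero_nodes 1 (m + 1) x" by (simp add: zero_nodes_def)
    then have "pattern_node_lin 1 l \<sigma> v = \<sigma> l" using v(2) by blast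
    then show "sgn (pattern_node_lin 1 l \<sigma> v) = \<sigma> l" using sgn_sign_vector[OF \<sigma>] by simp
  qed
  have ref: "\<forall>l\<in>layer_nodes 1 (m + 1). node_val 1 l x \<noteq> 0 \<longrightarrow> \<sigma> l = sgn (node_val 1 l x)"
    using ext by (simp add: extends_signs_def)
  obtain e where e: "x + e *\<^sub>R v \<in> pattern_cell 1 (m + 1) \<sigma>"
    "\<forall>l\<in>layer_nodes 1 (m + 1). sgn (node_val 1 l (x + e *\<^sub>R v)) = \<sigma> l"
    using perturb_into_pattern[OF x1 v(1) ref dir] by blast
  have "sign_vec 1 (m + 1) (x + e *\<^sub>R v) l = \<sigma> l" for l
  proof (cases "l \<in> layer_nodes 1 (m + 1)")
    case False
    then have "\<sigma> l = 0" using \<sigma> unfolding sign_vectors_def nodes_eq_layer_nodes by blast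
    then show ?thesis using False by (simp add: sign_vec_def)
  qed (use e(2) in \<open>simp add: sign_vec_def\<close>)
  moreover have "x + e *\<^sub>R v \<in> vspace (n 0)" using e(1) by (simp add: pattern_cell_def)
  ultimately show ?thesis using that by blast
qed

section \<open>The cube complex of sign sequences\<close>

lemma sign_complex_closed_under_faces:
  assumes gen: "generic_net m n W b" and st: "supertransversal m n W b"
    and C: "C \<in> canon_complex m n W b" and \<sigma>: "\<sigma> \<in> sign_vectors m n"
    and sub: "cube m n \<sigma> \<subseteq> cube m n (sign_seq m n W b C)"
  shows "cube m n \<sigma> \<in> sign_complex m n W b"
proof -
  obtain x where x: "x \<in> vspace (n 0)" "sign_seq m n W b C = sign_vec 1 (m + 1) x"
    using canon_complex_cases[OF C] by blast
  have "extends_signs 1 (m + 1) x \<sigma>"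
    using sub cube_subset_iff_extends_signs[OF \<sigma>] unfolding x(2) by blast
  then obtain x' where x': "x' \<in> vspace (n 0)" "sign_vec 1 (m + 1) x' = \<sigma>"
    using sign_vec_onto_extensions[OF gen st x(1) \<sigma>] by blast
  have "sign_seq m n W b (sign_cell 1 (m + 1) x') = \<sigma>"
    using sign_seq_sign_cell[OF x'(1), of m] unfolding x'(2) .
  moreover have "sign_cell 1 (m + 1) x' \<in> canon_complex m n W b" using x'(1) canon_complex_iff by blast
  ultimately show ?thesis unfolding sign_complex_def by (metis image_eqI)
qed

lemma cube_dim_sign_seq:
  assumes gen: "generic_net m n W b" and st: "supertransversal m n W b"
    and C: "C \<in> canon_complex m n W b"
  shows "cube_dim m n (sign_seq m n W b C) = n 0 - affdim C"
proof -
  obtain x where x: "x \<in> vspace (n 0)" "C = sign_cell 1 (m + 1) x" "sign_seq m n W b C = sign_vec 1 (m + 1) x"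
    using canon_complex_cases[OF C] by blast
  have "affdim C = dim (cell_dirs 1 (m + 1) x)"
    unfolding affdim_def x(2) using tangent_sign_cell[of x 1 "m + 1"] x(1) by simp
  moreover have "cube_dim m n (sign_seq m n W b C) = card (zero_nodes 1 (m + 1) x)"
    unfolding x(3) by (rule cube_dim_sign_vec)
  ultimately show ?thesis using dim_cell_dirs_add_card_zero_nodes[OF gen st x(1)] by simp
qed

lemma sign_complex_pure:
  assumes gen: "generic_net m n W b" and st: "supertransversal m n W b" and n01: "n 0 \<le> n 1"
    and C: "C \<in> canon_complex m n W b"
  shows "\<exists>C'\<in>canon_complex m n W b. cube m n (sign_seq m n W b C) \<subseteq> cube m n (sign_seq m n W b C')
    \<and> cube_dim m n (sign_seq m n W b C') = n 0"
proof -
  obtain x where x: "x \<in> vspace (n 0)" "sign_seq m n W b C = sign_vec 1 (m + 1) x"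
    using canon_complex_cases[OF C] by blast
  then obtain x' where x': "x' \<in> vspace (n 0)" "extends_signs 1 (m + 1) x' (sign_vec 1 (m + 1) x)"
    "card (zero_nodes 1 (m + 1) x') = n 0"
    using reach_vertex[OF gen st n01] by blast
  let ?C' = "sign_cell 1 (m + 1) x'"
  have seq': "sign_seq m n W b ?C' = sign_vec 1 (m + 1) x'" using sign_seq_sign_cell[OF x'(1)] .
  have "?C' \<in> canon_complex m n W b" using x'(1) canon_complex_iff by blast
  moreover have "cube m n (sign_seq m n W b C) \<subseteq> cube m n (sign_seq m n W b ?C')"
    unfolding x(2) seq' using cube_subset_iff_extends_signs[OF sign_vec_in_sign_vectors] x'(2) by blast
  moreover have "cube_dim m n (sign_seq m n W b ?C') = n 0"
    unfolding seq' cube_dim_sign_vec by (rule x'(3))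
  ultimately show ?thesis by blast
qed

lemma inj_on_cube_sign_seq: "inj_on (\<lambda>C. cube m n (sign_seq m n W b C)) (canon_complex m n W b)"
proof (rule inj_onI)
  fix C1 C2 assume C1: "C1 \<in> canon_complex m n W b" and C2: "C2 \<in> canon_complex m n W b"
    and eq: "cube m n (sign_seq m n W b C1) = cube m n (sign_seq m n W b C2)"
  obtain x1 where x1: "C1 = sign_cell 1 (m + 1) x1" "sign_seq m n W b C1 = sign_vec 1 (m + 1) x1"
    using canon_complex_cases[OF C1] by blast
  obtain x2 where x2: "C2 = sign_cell 1 (m + 1) x2" "sign_seq m n W b C2 = sign_vec 1 (m + 1) x2"
    using canon_complex_cases[OF C2] by blast
  have "sign_vec 1 (m + 1) x1 = sign_vec 1 (m + 1) x2"
    using eq unfolding x1(2) x2(2) by (rule cube_eq_imp_eq[OF sign_vec_in_sign_vectors sign_vec_in_sign_vectors])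
  then show "C1 = C2" unfolding x1(1) x2(1) by simp
qed

end

theorem theorem20:
  fixes m :: nat and n :: "nat \<Rightarrow> nat"
    and W :: "nat \<Rightarrow> nat \<Rightarrow> nat \<Rightarrow> real" and b :: "nat \<Rightarrow> nat \<Rightarrow> real"
  assumes "m \<ge> 1"
    and "\<forall>i \<le> m. n i \<ge> 1" and "n (m + 1) = 1"
    and "n 1 \<ge> n 0"
    and "generic_net m n W b"
    and "supertransversal m n W b"
  shows
    \<comment> \<open>S(F) is closed under taking faces\<close>
    "(\<forall>C \<in> canon_complex m n W b. \<forall>\<sigma> \<in> sign_vectors m n.
        cube m n \<sigma> \<subseteq> cube m n (sign_seq m n W b C) \<longrightarrow> cube m n \<sigma> \<in> sign_complex m n W b)
   \<comment> \<open>S(F) is pure n_0-dimensional\<close>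
   \<and> (\<forall>C \<in> canon_complex m n W b. cube_dim m n (sign_seq m n W b C) \<le> n 0 \<and>
        (\<exists>C' \<in> canon_complex m n W b. cube m n (sign_seq m n W b C) \<subseteq> cube m n (sign_seq m n W b C')
            \<and> cube_dim m n (sign_seq m n W b C') = n 0))
   \<comment> \<open>C \<mapsto> Q_s(C) is a bijection C(F) -> S(F) sending codimension-k cells to k-cubes\<close>
   \<and> bij_betw (\<lambda>C. cube m n (sign_seq m n W b C)) (canon_complex m n W b) (sign_complex m n W b)
   \<and> (\<forall>C \<in> canon_complex m n W b. cube_dim m n (sign_seq m n W b C) = n 0 - affdim C)"
proof -
  interpret relu_net n W b .
  have gen: "generic_net m n W b" and st: "supertransversal m n W b" and n01: "n 0 \<le> n 1"
    using assms by auto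
  have "bij_betw (\<lambda>C. cube m n (sign_seq m n W b C)) (canon_complex m n W b) (sign_complex m n W b)"
    unfolding sign_complex_def by (rule inj_on_imp_bij_betw[OF inj_on_cube_sign_seq])
  moreover have "cube_dim m n (sign_seq m n W b C) \<le> n 0" if "C \<in> canon_complex m n W b" for C
    using cube_dim_sign_seq[OF gen st that] by simp
  ultimately show ?thesis
    using sign_complex_closed_under_faces[OF gen st] cube_dim_sign_seq[OF gen st]
      sign_complex_pure[OF gen st n01]
    by blast
qed

end
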